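(* Let $\mathcal{H}$ be a Hilbert space, $\Lambda$ an index set, $q=\{q_{\alpha\beta}\in\mathbb{T}:\alpha\ne\beta\in\Lambda\}$ with $q_{\alpha\beta}=q_{\beta\alpha}^{-1}$, and $\{V_\alpha:\alpha\in\Lambda\}$ a family of isometries on $\mathcal{H}$ with $V_\alpha V_\beta=q_{\alpha\beta}V_\beta V_\alpha$ for all $\alpha\ne\beta$. Then there exist a Hilbert space $\mathcal{K}\supseteq\mathcal{H}$ and unitaries $\{U_\alpha:\alpha\in\Lambda\}$ on $\mathcal{K}$ with $U_\alpha U_\beta=q_{\alpha\beta}U_\beta U_\alpha$ for all $\alpha\ne\beta$ such that $V_\alpha=U_\alpha|_{\mathcal{H}}$ for every $\alpha\in\Lambda$. *)

theory Defs
  imports Complex_Main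
begin

text \<open>A complex Hilbert space presented concretely: a carrier set inside some
ambient type together with its vector-space operations and inner product
(linear in the first argument, conjugate-linear in the second).\<close>

record 'a hspace =
  hcarrier :: "'a set"
  hadd :: "'a \<Rightarrow> 'a \<Rightarrow> 'a"
  hscale :: "complex \<Rightarrow> 'a \<Rightarrow> 'a"
  hzero :: 'a
  hinner :: "'a \<Rightarrow> 'a \<Rightarrow> complex"

definition hdiff :: "'a hspace \<Rightarrow> 'a \<Rightarrow> 'a \<Rightarrow> 'a" where
  "hdiff H x y = hadd H x (hscale H (-1) y)"

definition hnorm :: "'a hspace \<Rightarrow> 'a \<Rightarrow> real" where
  "hnorm H x = sqrt (Re (hinner H x x))"

definition is_chilbert :: "'a hspace \<Rightarrow> bool" where
  "is_chilbert H \<longleftrightarrow>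
     (let S = hcarrier H; add = hadd H; sc = hscale H; z = hzero H; ip = hinner H in
      z \<in> S \<and>
      (\<forall>x\<in>S. \<forall>y\<in>S. add x y \<in> S) \<and>
      (\<forall>a. \<forall>x\<in>S. sc a x \<in> S) \<and>
      (\<forall>x\<in>S. \<forall>y\<in>S. \<forall>w\<in>S. add (add x y) w = add x (add y w)) \<and>
      (\<forall>x\<in>S. \<forall>y\<in>S. add x y = add y x) \<and>
      (\<forall>x\<in>S. add z x = x) \<and>
      (\<forall>x\<in>S. \<exists>y\<in>S. add x y = z) \<and>
      (\<forall>a. \<forall>x\<in>S. \<forall>y\<in>S. sc a (add x y) = add (sc a x) (sc a y)) \<and>
      (\<forall>a b. \<forall>x\<in>S. sc (a + b) x = add (sc a x) (sc b x)) \<and>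
      (\<forall>a b. \<forall>x\<in>S. sc a (sc b x) = sc (a * b) x) \<and>
      (\<forall>x\<in>S. sc 1 x = x) \<and>
      (\<forall>x\<in>S. \<forall>y\<in>S. ip x y = cnj (ip y x)) \<and>
      (\<forall>x\<in>S. \<forall>y\<in>S. \<forall>w\<in>S. ip (add x y) w = ip x w + ip y w) \<and>
      (\<forall>a. \<forall>x\<in>S. \<forall>y\<in>S. ip (sc a x) y = a * ip x y) \<and>
      (\<forall>x\<in>S. Re (ip x x) \<ge> 0) \<and>
      (\<forall>x\<in>S. ip x x = 0 \<longrightarrow> x = z) \<and>
      \<comment> \<open>completeness with respect to the induced norm\<close>
      (\<forall>f::nat \<Rightarrow> 'a. (\<forall>n. f n \<in> S) \<longrightarrow>
         (\<forall>e>0. \<exists>N. \<forall>m\<ge>N. \<forall>n\<ge>N. hnorm H (hdiff H (f m) (f n)) < e) \<longrightarrow>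
         (\<exists>x\<in>S. (\<lambda>n. hnorm H (hdiff H (f n) x)) \<longlonglongrightarrow> 0)))"

definition hlinear :: "'a hspace \<Rightarrow> 'b hspace \<Rightarrow> ('a \<Rightarrow> 'b) \<Rightarrow> bool" where
  "hlinear H K T \<longleftrightarrow>
     (\<forall>x\<in>hcarrier H. T x \<in> hcarrier K) \<and>
     (\<forall>x\<in>hcarrier H. \<forall>y\<in>hcarrier H. T (hadd H x y) = hadd K (T x) (T y)) \<and>
     (\<forall>a. \<forall>x\<in>hcarrier H. T (hscale H a x) = hscale K a (T x))"

definition hisometry_map :: "'a hspace \<Rightarrow> 'b hspace \<Rightarrow> ('a \<Rightarrow> 'b) \<Rightarrow> bool" where
  "hisometry_map H K T \<longleftrightarrow> hlinear H K T \<and>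
     (\<forall>x\<in>hcarrier H. hnorm K (T x) = hnorm H x)"

definition hisometry :: "'a hspace \<Rightarrow> ('a \<Rightarrow> 'a) \<Rightarrow> bool" where
  "hisometry H V \<longleftrightarrow> hisometry_map H H V"

definition hunitary :: "'a hspace \<Rightarrow> ('a \<Rightarrow> 'a) \<Rightarrow> bool" where
  "hunitary H U \<longleftrightarrow> hisometry_map H H U \<and> U ` hcarrier H = hcarrier H"

end

theory Submission
  imports Defs "HOL-Library.Function_Algebras"
begin

text \<open>
  Fix a well-order \<open>\<prec>\<close> on the index set and, for a finitely supported multi-index \<open>n\<close>,
  let \<open>W n\<close> be the product of the \<open>V a\<close>, each taken \<open>n a\<close> times, in increasing order
  of \<open>a\<close>. The \<open>q\<close>-commutation relations give \<open>W n \<circ> W m = twist q n m \<cdot> W (n + m)\<close>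
  with a unimodular twist that is multiplicative in each argument. The dilation space is the
  completion of the inductive limit of copies of \<open>H\<close>, one for each multi-index \<open>n\<close>, in which
  the copy at level \<open>n\<close> is mapped into the copy at level \<open>P \<ge> n\<close> by the isometry
  \<open>cnj (twist q (P - n) n) \<cdot> W (P - n)\<close>; a point \<open>(n, h)\<close> plays the role of \<open>U\<^sub>n\<^sup>* h\<close>.
  On each level, \<open>U\<^sub>a\<close> acts as \<open>V a\<close> times a phase. This is isometric, \<open>q\<close>-commuting, and
  onto up to null vectors, since \<open>(n, h)\<close> is identified with the image of a point of level
  \<open>n + basis a\<close>. Finally, an isometry of a pre-Hilbert space that is onto up to null vectors
  extends to a unitary of the completion, and the extensions inherit the commutation relations.
\<close>

section \<open>Semi-inner product spaces\<close>

lemma quadratic_nonneg_imp_le: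
  fixes A B C :: real
  assumes nonneg: "\<And>s. 0 \<le> A - 2 * s * C + s\<^sup>2 * C * B" and "0 \<le> B" and "0 \<le> C"
  shows "C \<le> A * B"
proof (cases "B = 0")
  case True
  have "C = 0"
  proof (rule ccontr)
    assume "C \<noteq> 0"
    then have "0 \<le> A - 2 * ((A + 1) / (2 * C)) * C"
      using nonneg[of "(A + 1) / (2 * C)"] True by simp
    also have "\<dots> = -1" using \<open>C \<noteq> 0\<close> by (simp add: field_simps)
    finally show False by simp
  qed
  then show ?thesis using True by simp
next
  case False
  then have "0 < B" using \<open>0 \<le> B\<close> by simp
  have "0 \<le> A - 2 * (1 / B) * C + (1 / B)\<^sup>2 * C * B" by (rule nonneg)
  also have "\<dots> = A - C / B" using \<open>0 < B\<close> by (simp add: field_simps power2_eq_square)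
  finally show ?thesis using \<open>0 < B\<close> by (simp add: field_simps)
qed

text \<open>Only the laws of a semi-inner product are required: the vector-space laws and
definiteness may fail up to null vectors, which the completion identifies anyway.\<close>

locale pre_hilbert =
  fixes H :: "'d hspace"
  assumes zero_in: "hzero H \<in> hcarrier H"
    and add_in: "x \<in> hcarrier H \<Longrightarrow> y \<in> hcarrier H \<Longrightarrow> hadd H x y \<in> hcarrier H"
    and scale_in: "x \<in> hcarrier H \<Longrightarrow> hscale H a x \<in> hcarrier H"
    and inner_add_left: "x \<in> hcarrier H \<Longrightarrow> y \<in> hcarrier H \<Longrightarrow> z \<in> hcarrier H \<Longrightarrow>
      hinner H (hadd H x y) z = hinner H x z + hinner H y z"
    and inner_scale_left: "x \<in> hcarrier H \<Longrightarrow> y \<in> hcarrier H \<Longrightarrow>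
      hinner H (hscale H a x) y = a * hinner H x y"
    and inner_commute: "x \<in> hcarrier H \<Longrightarrow> y \<in> hcarrier H \<Longrightarrow> hinner H x y = cnj (hinner H y x)"
    and inner_self_nonneg: "x \<in> hcarrier H \<Longrightarrow> 0 \<le> Re (hinner H x x)"
    and inner_zero_left: "x \<in> hcarrier H \<Longrightarrow> hinner H (hzero H) x = 0"
begin

lemma diff_in: "x \<in> hcarrier H \<Longrightarrow> y \<in> hcarrier H \<Longrightarrow> hdiff H x y \<in> hcarrier H"
  by (simp add: hdiff_def add_in scale_in)

lemma inner_add_right: "x \<in> hcarrier H \<Longrightarrow> y \<in> hcarrier H \<Longrightarrow> z \<in> hcarrier H \<Longrightarrow>
    hinner H z (hadd H x y) = hinner H z x + hinner H z y"
  by (metis add_in complex_cnj_add inner_add_left inner_commute)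

lemma inner_scale_right: "x \<in> hcarrier H \<Longrightarrow> y \<in> hcarrier H \<Longrightarrow>
    hinner H y (hscale H a x) = cnj a * hinner H y x"
  by (metis complex_cnj_mult inner_scale_left inner_commute scale_in)

lemma inner_zero_right: "x \<in> hcarrier H \<Longrightarrow> hinner H x (hzero H) = 0"
  by (metis complex_cnj_zero inner_commute inner_zero_left zero_in)

lemma inner_diff_left: "x \<in> hcarrier H \<Longrightarrow> y \<in> hcarrier H \<Longrightarrow> z \<in> hcarrier H \<Longrightarrow>
    hinner H (hdiff H x y) z = hinner H x z - hinner H y z"
  by (simp add: hdiff_def inner_add_left inner_scale_left scale_in)

lemma inner_diff_right: "x \<in> hcarrier H \<Longrightarrow> y \<in> hcarrier H \<Longrightarrow> z \<in> hcarrier H \<Longrightarrow>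
    hinner H z (hdiff H x y) = hinner H z x - hinner H z y"
  by (simp add: hdiff_def inner_add_right inner_scale_right scale_in)

lemmas inner_simps = inner_add_left inner_add_right inner_scale_left inner_scale_right
  inner_diff_left inner_diff_right inner_zero_left inner_zero_right
  add_in scale_in diff_in zero_in

lemma inner_self_eq_Re: "x \<in> hcarrier H \<Longrightarrow> hinner H x x = complex_of_real (Re (hinner H x x))"
  using inner_commute[of x x] by (simp add: complex_eq_iff)

lemma hnorm_nonneg: "x \<in> hcarrier H \<Longrightarrow> 0 \<le> hnorm H x"
  by (simp add: hnorm_def inner_self_nonneg)

lemma hnorm_power2: "x \<in> hcarrier H \<Longrightarrow> (hnorm H x)\<^sup>2 = Re (hinner H x x)"
  by (simp add: hnorm_def inner_self_nonneg)

lemma Cauchy_Schwarz_ineq: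
  assumes x: "x \<in> hcarrier H" and y: "y \<in> hcarrier H"
  shows "(cmod (hinner H x y))\<^sup>2 \<le> Re (hinner H x x) * Re (hinner H y y)"
proof (rule quadratic_nonneg_imp_le)
  let ?c = "hinner H x y"
  fix s :: real
  define t where "t = complex_of_real s * ?c"
  have "0 \<le> Re (hinner H (hdiff H x (hscale H t y)) (hdiff H x (hscale H t y)))"
    using x y by (intro inner_self_nonneg) (simp add: inner_simps)
  also have "hinner H (hdiff H x (hscale H t y)) (hdiff H x (hscale H t y)) =
      hinner H x x - cnj t * ?c - t * cnj ?c + t * cnj t * hinner H y y"
    using x y inner_commute[OF y x] by (simp add: inner_simps algebra_simps)
  also have "Re \<dots> = Re (hinner H x x) - 2 * s * (cmod ?c)\<^sup>2 + s\<^sup>2 * (cmod ?c)\<^sup>2 * Re (hinner H y y)"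
    using inner_self_eq_Re[OF y] unfolding t_def cmod_power2
    by (simp add: power2_eq_square algebra_simps)
  finally show "0 \<le> Re (hinner H x x) - 2 * s * (cmod ?c)\<^sup>2
      + s\<^sup>2 * (cmod ?c)\<^sup>2 * Re (hinner H y y)" .
qed (use x y inner_self_nonneg in auto)

lemma Cauchy_Schwarz:
  "x \<in> hcarrier H \<Longrightarrow> y \<in> hcarrier H \<Longrightarrow> cmod (hinner H x y) \<le> hnorm H x * hnorm H y"
  by (metis Cauchy_Schwarz_ineq hnorm_nonneg hnorm_power2 mult_nonneg_nonneg power2_le_imp_le
      power_mult_distrib)

lemma hnorm_eq_if_inner_eq:
  assumes "x \<in> hcarrier H" "y \<in> hcarrier H" "\<And>z. z \<in> hcarrier H \<Longrightarrow> hinner H x z = hinner H y z"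
  shows "hnorm H x = hnorm H y"
proof -
  have "hinner H x x = cnj (hinner H x y)" using assms inner_commute by metis
  also have "\<dots> = cnj (hinner H y y)" using assms by simp
  also have "\<dots> = hinner H y y" using inner_self_eq_Re[OF assms(2)]
    by (metis complex_cnj_complex_of_real)
  finally show ?thesis by (simp add: hnorm_def)
qed

lemma hnorm_add_le: "x \<in> hcarrier H \<Longrightarrow> y \<in> hcarrier H \<Longrightarrow> hnorm H (hadd H x y) \<le> hnorm H x + hnorm H y"
proof -
  assume x: "x \<in> hcarrier H" and y: "y \<in> hcarrier H"
  have "Re (hinner H x y) \<le> hnorm H x * hnorm H y"
    using Cauchy_Schwarz[OF x y] complex_Re_le_cmod order_trans by blast
  moreover have "Re (hinner H y x) = Re (hinner H x y)" using inner_commute[OF y x] by simp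
  ultimately have "(hnorm H (hadd H x y))\<^sup>2 \<le> (hnorm H x + hnorm H y)\<^sup>2"
    using x y by (simp add: hnorm_power2 inner_simps power2_sum)
  then show ?thesis using x y by (meson add_nonneg_nonneg hnorm_nonneg power2_le_imp_le)
qed

lemma hnorm_eq_0_iff: "x \<in> hcarrier H \<Longrightarrow> hnorm H x = 0 \<longleftrightarrow> (\<forall>z\<in>hcarrier H. hinner H x z = 0)"
  by (metis Cauchy_Schwarz hnorm_def mult_zero_left norm_le_zero_iff real_sqrt_zero
      zero_complex.simps(1))

lemma hnorm_diff_eq_0:
  "x \<in> hcarrier H \<Longrightarrow> y \<in> hcarrier H \<Longrightarrow> (\<And>z. z \<in> hcarrier H \<Longrightarrow> hinner H x z = hinner H y z) \<Longrightarrow>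
    hnorm H (hdiff H x y) = 0"
  by (simp add: hnorm_eq_0_iff diff_in inner_diff_left)

lemma hnorm_diff_commute:
  "x \<in> hcarrier H \<Longrightarrow> y \<in> hcarrier H \<Longrightarrow> hnorm H (hdiff H x y) = hnorm H (hdiff H y x)"
proof -
  assume x: "x \<in> hcarrier H" and y: "y \<in> hcarrier H"
  have "hnorm H (hdiff H x y) = hnorm H (hscale H (-1) (hdiff H y x))"
    by (rule hnorm_eq_if_inner_eq) (use x y in \<open>simp_all add: inner_simps\<close>)
  also have "\<dots> = hnorm H (hdiff H y x)" using x y by (simp add: hnorm_def inner_simps)
  finally show ?thesis .
qed

lemma hnorm_diff_triangle: "x \<in> hcarrier H \<Longrightarrow> y \<in> hcarrier H \<Longrightarrow> z \<in> hcarrier H \<Longrightarrow>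
    hnorm H (hdiff H x z) \<le> hnorm H (hdiff H x y) + hnorm H (hdiff H y z)"
proof -
  assume x: "x \<in> hcarrier H" and y: "y \<in> hcarrier H" and z: "z \<in> hcarrier H"
  have "hnorm H (hdiff H x z) = hnorm H (hadd H (hdiff H x y) (hdiff H y z))"
    by (rule hnorm_eq_if_inner_eq) (use x y z in \<open>simp_all add: inner_simps\<close>)
  then show ?thesis using x y z by (simp add: hnorm_add_le diff_in)
qed

lemma hnorm_le_add_diff:
  "x \<in> hcarrier H \<Longrightarrow> y \<in> hcarrier H \<Longrightarrow> hnorm H x \<le> hnorm H y + hnorm H (hdiff H x y)"
proof -
  assume x: "x \<in> hcarrier H" and y: "y \<in> hcarrier H"
  have "hnorm H x = hnorm H (hadd H y (hdiff H x y))"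
    by (rule hnorm_eq_if_inner_eq) (use x y in \<open>simp_all add: inner_simps\<close>)
  then show ?thesis using x y by (simp add: hnorm_add_le diff_in)
qed

lemma hnorm_scale: "x \<in> hcarrier H \<Longrightarrow> hnorm H (hscale H a x) = cmod a * hnorm H x"
proof -
  assume x: "x \<in> hcarrier H"
  have "hinner H (hscale H a x) (hscale H a x) = (a * cnj a) * hinner H x x"
    using x by (simp add: inner_simps)
  also have "a * cnj a = of_real ((cmod a)\<^sup>2)" by (rule complex_norm_square[symmetric])
  finally have "hinner H (hscale H a x) (hscale H a x) = of_real ((cmod a)\<^sup>2) * hinner H x x" .
  then show ?thesis by (simp add: hnorm_def real_sqrt_mult)
qed

lemma is_chilbertI:
  assumes "\<And>x y z. x \<in> hcarrier H \<Longrightarrow> y \<in> hcarrier H \<Longrightarrow> z \<in> hcarrier H \<Longrightarrow>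
      hadd H (hadd H x y) z = hadd H x (hadd H y z)"
    and "\<And>x y. x \<in> hcarrier H \<Longrightarrow> y \<in> hcarrier H \<Longrightarrow> hadd H x y = hadd H y x"
    and "\<And>x. x \<in> hcarrier H \<Longrightarrow> hadd H (hzero H) x = x"
    and "\<And>x. x \<in> hcarrier H \<Longrightarrow> hadd H x (hscale H (-1) x) = hzero H"
    and "\<And>a x y. x \<in> hcarrier H \<Longrightarrow> y \<in> hcarrier H \<Longrightarrow>
      hscale H a (hadd H x y) = hadd H (hscale H a x) (hscale H a y)"
    and "\<And>a b x. x \<in> hcarrier H \<Longrightarrow> hscale H (a + b) x = hadd H (hscale H a x) (hscale H b x)"
    and "\<And>a b x. x \<in> hcarrier H \<Longrightarrow> hscale H a (hscale H b x) = hscale H (a * b) x"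
    and "\<And>x. x \<in> hcarrier H \<Longrightarrow> hscale H 1 x = x"
    and "\<And>x. x \<in> hcarrier H \<Longrightarrow> hinner H x x = 0 \<Longrightarrow> x = hzero H"
    and "\<And>f. (\<And>n. f n \<in> hcarrier H) \<Longrightarrow>
      (\<And>e. e > 0 \<Longrightarrow> \<exists>N. \<forall>m\<ge>N. \<forall>n\<ge>N. hnorm H (hdiff H (f m) (f n)) < e) \<Longrightarrow>
      \<exists>x\<in>hcarrier H. (\<lambda>n. hnorm H (hdiff H (f n) x)) \<longlonglongrightarrow> 0"
  shows "is_chilbert H"
  unfolding is_chilbert_def Let_def
proof (intro conjI ballI allI impI)
  fix x assume "x \<in> hcarrier H"
  then show "\<exists>y\<in>hcarrier H. hadd H x y = hzero H" using assms(4) scale_in by blast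
next
  fix x y assume "x \<in> hcarrier H" "y \<in> hcarrier H"
  then show "hinner H x y = cnj (hinner H y x)" by (rule inner_commute)
next
  fix f :: "nat \<Rightarrow> 'd"
  assume "\<forall>n. f n \<in> hcarrier H" "\<forall>e>0. \<exists>N. \<forall>m\<ge>N. \<forall>n\<ge>N. hnorm H (hdiff H (f m) (f n)) < e"
  then show "\<exists>x\<in>hcarrier H. (\<lambda>n. hnorm H (hdiff H (f n) x)) \<longlonglongrightarrow> 0" using assms(10) by blast
qed (assumption | rule assms(1-3,5-9) zero_in add_in scale_in inner_add_left inner_scale_left
    inner_self_nonneg)+

lemma inner_polarization:
  assumes "x \<in> hcarrier H" "y \<in> hcarrier H"
  defines "Q \<equiv> \<lambda>c. hinner H (hadd H x (hscale H c y)) (hadd H x (hscale H c y))"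
  shows "4 * hinner H x y = Q 1 - Q (-1) + \<i> * Q \<i> - \<i> * Q (-\<i>)"
  using assms by (simp add: inner_simps algebra_simps)

end

lemma hisometry_map_inner:
  assumes "pre_hilbert H" "pre_hilbert K" "hisometry_map H K T"
    and x: "x \<in> hcarrier H" and y: "y \<in> hcarrier H"
  shows "hinner K (T x) (T y) = hinner H x y"
proof -
  interpret H: pre_hilbert H by fact
  interpret K: pre_hilbert K by fact
  have T_in: "T z \<in> hcarrier K" and T_norm: "hnorm K (T z) = hnorm H z"
    and T_lin: "T (hadd H z (hscale H c w)) = hadd K (T z) (hscale K c (T w))"
    if "z \<in> hcarrier H" "w \<in> hcarrier H" for z w c
    using assms(3) that H.scale_in unfolding hisometry_map_def hlinear_def by auto
  have quad: "hinner K (T z) (T z) = hinner H z z" if "z \<in> hcarrier H" for z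
    using T_in[OF that that] T_norm[OF that that] that K.hnorm_power2 H.hnorm_power2
        K.inner_self_eq_Re H.inner_self_eq_Re
    by metis
  have "4 * hinner K (T x) (T y) = 4 * hinner H x y"
    unfolding K.inner_polarization[OF T_in[OF x x] T_in[OF y y]] H.inner_polarization[OF x y]
    using x y by (simp add: T_lin[symmetric] H.inner_simps quad)
  then show ?thesis by simp
qed

lemma is_chilbertD:
  assumes "is_chilbert H"
  shows "hzero H \<in> hcarrier H"
    and "x \<in> hcarrier H \<Longrightarrow> y \<in> hcarrier H \<Longrightarrow> hadd H x y \<in> hcarrier H"
    and "x \<in> hcarrier H \<Longrightarrow> hscale H a x \<in> hcarrier H"
    and "x \<in> hcarrier H \<Longrightarrow> hadd H (hzero H) x = x"
    and "x \<in> hcarrier H \<Longrightarrow> y \<in> hcarrier H \<Longrightarrow>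
      hscale H a (hadd H x y) = hadd H (hscale H a x) (hscale H a y)"
    and "x \<in> hcarrier H \<Longrightarrow> hscale H a (hscale H b x) = hscale H (a * b) x"
    and "x \<in> hcarrier H \<Longrightarrow> hscale H 1 x = x"
    and "x \<in> hcarrier H \<Longrightarrow> y \<in> hcarrier H \<Longrightarrow> hinner H x y = cnj (hinner H y x)"
    and "x \<in> hcarrier H \<Longrightarrow> y \<in> hcarrier H \<Longrightarrow> z \<in> hcarrier H \<Longrightarrow>
      hinner H (hadd H x y) z = hinner H x z + hinner H y z"
    and "x \<in> hcarrier H \<Longrightarrow> y \<in> hcarrier H \<Longrightarrow> hinner H (hscale H a x) y = a * hinner H x y"
    and "x \<in> hcarrier H \<Longrightarrow> 0 \<le> Re (hinner H x x)"
  using assms[unfolded is_chilbert_def Let_def] by metis+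

lemma chilbert_pre_hilbert:
  assumes H: "is_chilbert H" shows "pre_hilbert H"
proof
  fix x assume x: "x \<in> hcarrier H"
  have "hinner H (hadd H (hzero H) (hzero H)) x = hinner H (hzero H) x"
    by (simp add: is_chilbertD(1,4)[OF H])
  then show "hinner H (hzero H) x = 0"
    using is_chilbertD(1,9)[OF H] x by simp
qed (rule is_chilbertD[OF H]; assumption)+

lemma hisometry_id: "hisometry H id"
  by (simp add: hisometry_def hisometry_map_def hlinear_def)

lemma hisometry_map_comp: "hisometry_map A B f \<Longrightarrow> hisometry_map B C g \<Longrightarrow> hisometry_map A C (g \<circ> f)"
  by (simp add: hisometry_map_def hlinear_def)

section \<open>Completion\<close>

lemma inverse_Suc_antimono: "M \<le> k \<Longrightarrow> inverse (real (Suc k)) \<le> inverse (real (Suc M))"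
  by (simp add: le_imp_inverse_le)

context pre_hilbert
begin

definition hcauchy :: "(nat \<Rightarrow> 'd) \<Rightarrow> bool" where
  "hcauchy X \<longleftrightarrow> range X \<subseteq> hcarrier H \<and>
     (\<forall>e>0. \<exists>N. \<forall>m\<ge>N. \<forall>n\<ge>N. hnorm H (hdiff H (X m) (X n)) < e)"

definition seq_equiv :: "(nat \<Rightarrow> 'd) \<Rightarrow> (nat \<Rightarrow> 'd) \<Rightarrow> bool" where
  "seq_equiv X Y \<longleftrightarrow> (\<lambda>n. hnorm H (hdiff H (X n) (Y n))) \<longlonglongrightarrow> 0"

lemma hcauchy_in: "hcauchy X \<Longrightarrow> X n \<in> hcarrier H"
  by (auto simp: hcauchy_def)

lemma hcauchy_range: "hcauchy X \<Longrightarrow> range X \<subseteq> hcarrier H"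
  by (simp add: hcauchy_def)

lemma hcauchyD: "hcauchy X \<Longrightarrow> e > 0 \<Longrightarrow> \<exists>N. \<forall>m\<ge>N. \<forall>n\<ge>N. hnorm H (hdiff H (X m) (X n)) < e"
  by (simp add: hcauchy_def)

lemma hcauchy_const: "x \<in> hcarrier H \<Longrightarrow> hcauchy (\<lambda>n. x)"
  by (auto simp: hcauchy_def hnorm_diff_eq_0)

lemma hcauchy_dominated:
  assumes X: "hcauchy X" and Y: "hcauchy Y" and Z: "range Z \<subseteq> hcarrier H" and "0 < C"
    and dom: "\<And>m n. hnorm H (hdiff H (Z m) (Z n)) \<le>
      C * (hnorm H (hdiff H (X m) (X n)) + hnorm H (hdiff H (Y m) (Y n)))"
  shows "hcauchy Z"
  unfolding hcauchy_def
proof (intro conjI allI impI Z)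
  fix e :: real assume "e > 0"
  define e' where "e' = e / (2 * C)"
  have e': "e' > 0" using \<open>e > 0\<close> \<open>0 < C\<close> by (simp add: e'_def)
  obtain N1 where N1: "\<forall>m\<ge>N1. \<forall>n\<ge>N1. hnorm H (hdiff H (X m) (X n)) < e'"
    using hcauchyD[OF X e'] by blast
  obtain N2 where N2: "\<forall>m\<ge>N2. \<forall>n\<ge>N2. hnorm H (hdiff H (Y m) (Y n)) < e'"
    using hcauchyD[OF Y e'] by blast
  have "hnorm H (hdiff H (Z m) (Z n)) < e" if "max N1 N2 \<le> m" "max N1 N2 \<le> n" for m n
  proof -
    have "C * (hnorm H (hdiff H (X m) (X n)) + hnorm H (hdiff H (Y m) (Y n))) < C * (e' + e')"
      using N1 N2 that \<open>0 < C\<close> by (intro mult_strict_left_mono add_strict_mono) auto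
    also have "\<dots> = e" using \<open>0 < C\<close> by (simp add: e'_def)
    finally show ?thesis using dom[of m n] by linarith
  qed
  then show "\<exists>N. \<forall>m\<ge>N. \<forall>n\<ge>N. hnorm H (hdiff H (Z m) (Z n)) < e" by blast
qed

lemma hcauchy_add: assumes "hcauchy X" "hcauchy Y" shows "hcauchy (\<lambda>n. hadd H (X n) (Y n))"
proof (rule hcauchy_dominated[OF assms _ zero_less_one])
  fix m n
  have "hnorm H (hdiff H (hadd H (X m) (Y m)) (hadd H (X n) (Y n))) =
      hnorm H (hadd H (hdiff H (X m) (X n)) (hdiff H (Y m) (Y n)))"
    by (rule hnorm_eq_if_inner_eq) (use assms in \<open>simp_all add: hcauchy_in inner_simps\<close>)
  then show "hnorm H (hdiff H (hadd H (X m) (Y m)) (hadd H (X n) (Y n))) \<le>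
      1 * (hnorm H (hdiff H (X m) (X n)) + hnorm H (hdiff H (Y m) (Y n)))"
    using assms by (simp add: hnorm_add_le hcauchy_in diff_in)
qed (use assms in \<open>auto simp: hcauchy_in add_in\<close>)

lemma hcauchy_scale: assumes X: "hcauchy X" shows "hcauchy (\<lambda>n. hscale H c (X n))"
proof (rule hcauchy_dominated[OF X X _ add_nonneg_pos[OF norm_ge_zero zero_less_one]])
  fix m n
  have "hnorm H (hdiff H (hscale H c (X m)) (hscale H c (X n))) =
      hnorm H (hscale H c (hdiff H (X m) (X n)))"
    by (rule hnorm_eq_if_inner_eq) (use X in \<open>simp_all add: hcauchy_in inner_simps algebra_simps\<close>)
  then show "hnorm H (hdiff H (hscale H c (X m)) (hscale H c (X n))) \<le>
      (cmod c + 1) * (hnorm H (hdiff H (X m) (X n)) + hnorm H (hdiff H (X m) (X n)))"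
    using X hnorm_nonneg[OF diff_in[OF hcauchy_in hcauchy_in]]
    by (simp add: hnorm_scale hcauchy_in diff_in algebra_simps)
qed (use X in \<open>auto simp: hcauchy_in scale_in\<close>)

lemma hcauchy_diff: "hcauchy X \<Longrightarrow> hcauchy Y \<Longrightarrow> hcauchy (\<lambda>n. hdiff H (X n) (Y n))"
  unfolding hdiff_def by (intro hcauchy_add hcauchy_scale)

lemma hcauchy_bounded:
  assumes "hcauchy X" obtains B where "B > 0" "\<And>n. hnorm H (X n) \<le> B"
proof -
  obtain N where N: "\<forall>m\<ge>N. \<forall>n\<ge>N. hnorm H (hdiff H (X m) (X n)) < 1"
    using hcauchyD[OF assms] by (meson zero_less_one)
  define B where "B = (\<Sum>i\<le>N. hnorm H (X i)) + 1"
  have le_sum: "hnorm H (X n) \<le> (\<Sum>i\<le>N. hnorm H (X i))" if "n \<le> N" for n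
    by (rule member_le_sum) (use that assms in \<open>auto simp: hcauchy_in hnorm_nonneg\<close>)
  have "hnorm H (X n) \<le> B" for n
  proof (cases "n \<le> N")
    case False
    have "hnorm H (X n) \<le> hnorm H (X N) + hnorm H (hdiff H (X n) (X N))"
      using hnorm_le_add_diff assms by (simp add: hcauchy_in)
    also have "\<dots> \<le> B" using N[rule_format, of n N] False le_sum[of N] by (simp add: B_def)
    finally show ?thesis .
  qed (use le_sum in \<open>force simp: B_def\<close>)
  moreover have "B > 0"
    unfolding B_def using assms by (simp add: add_nonneg_pos sum_nonneg hcauchy_in hnorm_nonneg)
  ultimately show thesis using that by blast
qed

lemma inner_diff_le:
  assumes "x \<in> hcarrier H" "y \<in> hcarrier H" "x' \<in> hcarrier H" "y' \<in> hcarrier H"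
  shows "cmod (hinner H x y - hinner H x' y') \<le>
    hnorm H (hdiff H x x') * hnorm H y + hnorm H x' * hnorm H (hdiff H y y')"
proof -
  have "hinner H x y - hinner H x' y' = hinner H (hdiff H x x') y + hinner H x' (hdiff H y y')"
    using assms by (simp add: inner_simps)
  then have "cmod (hinner H x y - hinner H x' y') \<le>
      cmod (hinner H (hdiff H x x') y) + cmod (hinner H x' (hdiff H y y'))"
    by (simp add: norm_triangle_ineq)
  also have "\<dots> \<le> hnorm H (hdiff H x x') * hnorm H y + hnorm H x' * hnorm H (hdiff H y y')"
    using assms by (intro add_mono Cauchy_Schwarz) (simp_all add: diff_in)
  finally show ?thesis .
qed

lemma inner_diff_le_bounds:
  assumes X: "hcauchy X" and Y: "hcauchy Y" and X': "hcauchy X'" and Y': "hcauchy Y'"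
  obtains B where "B > 0" "\<And>m n. cmod (hinner H (X m) (Y m) - hinner H (X' n) (Y' n)) \<le>
    B * (hnorm H (hdiff H (X m) (X' n)) + hnorm H (hdiff H (Y m) (Y' n)))"
proof -
  obtain B1 where "B1 > 0" and B1: "\<And>n. hnorm H (Y n) \<le> B1" using hcauchy_bounded[OF Y] by blast
  obtain B2 where "B2 > 0" and B2: "\<And>n. hnorm H (X' n) \<le> B2" using hcauchy_bounded[OF X'] by blast
  have "cmod (hinner H (X m) (Y m) - hinner H (X' n) (Y' n)) \<le>
      max B1 B2 * (hnorm H (hdiff H (X m) (X' n)) + hnorm H (hdiff H (Y m) (Y' n)))" for m n
  proof -
    have "cmod (hinner H (X m) (Y m) - hinner H (X' n) (Y' n)) \<le>
        hnorm H (hdiff H (X m) (X' n)) * hnorm H (Y m) +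
        hnorm H (X' n) * hnorm H (hdiff H (Y m) (Y' n))"
      by (rule inner_diff_le) (use assms in \<open>simp_all add: hcauchy_in\<close>)
    also have "\<dots> \<le> hnorm H (hdiff H (X m) (X' n)) * max B1 B2 +
        max B1 B2 * hnorm H (hdiff H (Y m) (Y' n))"
      using assms B1[of m] B2[of n] \<open>B1 > 0\<close>
      by (intro add_mono mult_mono) (auto simp: hcauchy_in hnorm_nonneg diff_in)
    finally show ?thesis by (simp add: algebra_simps)
  qed
  then show thesis using that \<open>B1 > 0\<close> by (meson less_max_iff_disj)
qed

lemma hcauchy_inner_convergent:
  assumes X: "hcauchy X" and Y: "hcauchy Y" shows "convergent (\<lambda>n. hinner H (X n) (Y n))"
proof -
  obtain B where "B > 0" and B: "\<And>m n. cmod (hinner H (X m) (Y m) - hinner H (X n) (Y n)) \<le>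
      B * (hnorm H (hdiff H (X m) (X n)) + hnorm H (hdiff H (Y m) (Y n)))"
    using inner_diff_le_bounds[OF X Y X Y] by blast
  have "Cauchy (\<lambda>n. hinner H (X n) (Y n))"
  proof (rule metric_CauchyI)
    fix e :: real assume "e > 0"
    define e' where "e' = e / (2 * B)"
    have e': "e' > 0" using \<open>e > 0\<close> \<open>B > 0\<close> by (simp add: e'_def)
    obtain N1 where N1: "\<forall>m\<ge>N1. \<forall>n\<ge>N1. hnorm H (hdiff H (X m) (X n)) < e'" using hcauchyD[OF X e']
      by blast
    obtain N2 where N2: "\<forall>m\<ge>N2. \<forall>n\<ge>N2. hnorm H (hdiff H (Y m) (Y n)) < e'" using hcauchyD[OF Y e']
      by blast
    have "dist (hinner H (X m) (Y m)) (hinner H (X n) (Y n)) < e"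
      if "max N1 N2 \<le> m" "max N1 N2 \<le> n" for m n
    proof -
      have "B * (hnorm H (hdiff H (X m) (X n)) + hnorm H (hdiff H (Y m) (Y n))) < B * (e' + e')"
        using N1 N2 that \<open>B > 0\<close> by (intro mult_strict_left_mono add_strict_mono) auto
      also have "\<dots> = e" using \<open>B > 0\<close> by (simp add: e'_def)
      finally show ?thesis using B[of m n] by (simp add: dist_norm)
    qed
    then show "\<exists>M. \<forall>m\<ge>M. \<forall>n\<ge>M. dist (hinner H (X m) (Y m)) (hinner H (X n) (Y n)) < e" by blast
  qed
  then show ?thesis using Cauchy_convergent_iff by blast
qed


lemma seq_equiv_refl: "range X \<subseteq> hcarrier H \<Longrightarrow> seq_equiv X X"
  by (simp add: seq_equiv_def hnorm_diff_eq_0 range_subsetD)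

lemma seq_equiv_sym: "range X \<subseteq> hcarrier H \<Longrightarrow> range Y \<subseteq> hcarrier H \<Longrightarrow> seq_equiv X Y \<Longrightarrow> seq_equiv Y X"
  by (simp add: seq_equiv_def hnorm_diff_commute range_subsetD)

lemma seq_equiv_trans:
  assumes "range X \<subseteq> hcarrier H" "range Y \<subseteq> hcarrier H" "range Z \<subseteq> hcarrier H"
    and "seq_equiv X Y" "seq_equiv Y Z"
  shows "seq_equiv X Z"
  unfolding seq_equiv_def
proof (rule tendsto_sandwich[of "\<lambda>n. 0" _ _
    "\<lambda>n. hnorm H (hdiff H (X n) (Y n)) + hnorm H (hdiff H (Y n) (Z n))"])
  show "(\<lambda>n. hnorm H (hdiff H (X n) (Y n)) + hnorm H (hdiff H (Y n) (Z n))) \<longlonglongrightarrow> 0"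
    using assms(4,5) unfolding seq_equiv_def by (rule tendsto_add_zero)
qed (use assms(1-3) in \<open>simp_all add: range_subsetD hnorm_nonneg diff_in hnorm_diff_triangle\<close>)

lemma seq_equiv_if_null:
  "(\<And>n. hnorm H (hdiff H (X n) (Y n)) = 0) \<Longrightarrow> seq_equiv X Y"
  by (simp add: seq_equiv_def)

definition limit_inner :: "(nat \<Rightarrow> 'd) \<Rightarrow> (nat \<Rightarrow> 'd) \<Rightarrow> complex" where
  "limit_inner X Y = lim (\<lambda>n. hinner H (X n) (Y n))"

lemma limit_inner_tendsto: "hcauchy X \<Longrightarrow> hcauchy Y \<Longrightarrow> (\<lambda>n. hinner H (X n) (Y n)) \<longlonglongrightarrow> limit_inner X Y"
  unfolding limit_inner_def using hcauchy_inner_convergent convergent_LIMSEQ_iff by blast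

lemma limit_inner_eqI: "(\<lambda>n. hinner H (X n) (Y n)) \<longlonglongrightarrow> c \<Longrightarrow> limit_inner X Y = c"
  unfolding limit_inner_def by (rule limI)

lemma limit_inner_cong:
  assumes "hcauchy X" "hcauchy Y" "hcauchy X'" "hcauchy Y'" "seq_equiv X X'" "seq_equiv Y Y'"
  shows "limit_inner X Y = limit_inner X' Y'"
proof (rule limit_inner_eqI)
  obtain B where B: "\<And>n. cmod (hinner H (X n) (Y n) - hinner H (X' n) (Y' n)) \<le>
      B * (hnorm H (hdiff H (X n) (X' n)) + hnorm H (hdiff H (Y n) (Y' n)))"
    using inner_diff_le_bounds[OF assms(1-4)] by metis
  have bound: "cmod (hinner H (X n) (Y n) - hinner H (X' n) (Y' n)) \<le>
      \<bar>hnorm H (hdiff H (X n) (X' n)) + hnorm H (hdiff H (Y n) (Y' n))\<bar> * B" for n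
  proof -
    have "0 \<le> hnorm H (hdiff H (X n) (X' n)) + hnorm H (hdiff H (Y n) (Y' n))"
      using assms(1-4) by (intro add_nonneg_nonneg hnorm_nonneg diff_in hcauchy_in)
    then show ?thesis using B[of n] by (simp add: mult.commute)
  qed
  have "(\<lambda>n. hnorm H (hdiff H (X n) (X' n)) + hnorm H (hdiff H (Y n) (Y' n))) \<longlonglongrightarrow> 0"
    using assms(5,6) unfolding seq_equiv_def by (rule tendsto_add_zero)
  then have "(\<lambda>n. hinner H (X n) (Y n) - hinner H (X' n) (Y' n)) \<longlonglongrightarrow> 0"
    by (rule tendsto_0_le[where K = B]) (simp add: bound)
  from tendsto_add[OF this limit_inner_tendsto[OF assms(3,4)]]
  show "(\<lambda>n. hinner H (X n) (Y n)) \<longlonglongrightarrow> limit_inner X' Y'" by simp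
qed

lemma limit_inner_add_left:
  "hcauchy X \<Longrightarrow> hcauchy Y \<Longrightarrow> hcauchy Z \<Longrightarrow>
    limit_inner (\<lambda>n. hadd H (X n) (Y n)) Z = limit_inner X Z + limit_inner Y Z"
  by (rule limit_inner_eqI) (simp add: inner_add_left hcauchy_in tendsto_add limit_inner_tendsto)

lemma limit_inner_scale_left:
  "hcauchy X \<Longrightarrow> hcauchy Z \<Longrightarrow> limit_inner (\<lambda>n. hscale H c (X n)) Z = c * limit_inner X Z"
  by (rule limit_inner_eqI)
      (simp add: inner_scale_left hcauchy_in tendsto_mult_left limit_inner_tendsto)

lemma limit_inner_zero_left: "hcauchy Z \<Longrightarrow> limit_inner (\<lambda>n. hzero H) Z = 0"
  by (rule limit_inner_eqI) (simp add: inner_zero_left hcauchy_in)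

lemma limit_inner_const: "limit_inner (\<lambda>n. x) (\<lambda>n. y) = hinner H x y"
  by (rule limit_inner_eqI) simp

lemma limit_inner_commute:
  assumes "hcauchy X" "hcauchy Y" shows "limit_inner X Y = cnj (limit_inner Y X)"
proof (rule limit_inner_eqI)
  have "hinner H (X n) (Y n) = cnj (hinner H (Y n) (X n))" for n
    using assms by (intro inner_commute hcauchy_in)
  then show "(\<lambda>n. hinner H (X n) (Y n)) \<longlonglongrightarrow> cnj (limit_inner Y X)"
    using assms by (simp add: tendsto_cnj limit_inner_tendsto)
qed

lemma limit_inner_self_nonneg: "hcauchy X \<Longrightarrow> 0 \<le> Re (limit_inner X X)"
  by (rule LIMSEQ_le_const[OF tendsto_Re[OF limit_inner_tendsto]])
    (auto simp: inner_self_nonneg hcauchy_in)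

lemma hnorm_tendsto: "hcauchy X \<Longrightarrow> (\<lambda>n. hnorm H (X n)) \<longlonglongrightarrow> sqrt (Re (limit_inner X X))"
  unfolding hnorm_def by (intro tendsto_real_sqrt tendsto_Re limit_inner_tendsto)

lemma seq_equiv_if_limit_inner_eq:
  assumes X: "hcauchy X" and Y: "hcauchy Y"
    and eq: "\<And>Z. hcauchy Z \<Longrightarrow> limit_inner X Z = limit_inner Y Z"
  shows "seq_equiv X Y"
proof -
  let ?D = "\<lambda>n. hdiff H (X n) (Y n)"
  have D: "hcauchy ?D" by (rule hcauchy_diff[OF X Y])
  have "limit_inner ?D ?D = limit_inner X ?D - limit_inner Y ?D"
    unfolding hdiff_def using X Y D
    by (simp add: limit_inner_add_left limit_inner_scale_left hcauchy_scale hcauchy_add)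
  then have "limit_inner ?D ?D = 0" using eq[OF D] by simp
  then show ?thesis using hnorm_tendsto[OF D] unfolding seq_equiv_def by simp
qed

text \<open>Each class of Cauchy sequences is represented by a canonical member, so the
completion can be carved out of the type of sequences without a quotient type.\<close>

definition canon :: "(nat \<Rightarrow> 'd) \<Rightarrow> nat \<Rightarrow> 'd" where
  "canon X = (SOME Y. hcauchy Y \<and> seq_equiv X Y)"

lemma canon:
  assumes "hcauchy X" shows "hcauchy (canon X)" "seq_equiv X (canon X)" "seq_equiv (canon X) X"
proof -
  have "hcauchy X \<and> seq_equiv X X" using assms seq_equiv_refl hcauchy_range by blast
  then have "hcauchy (canon X) \<and> seq_equiv X (canon X)"
    unfolding canon_def by (rule someI[where P = "\<lambda>Y. hcauchy Y \<and> seq_equiv X Y"])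
  then show "hcauchy (canon X)" "seq_equiv X (canon X)" "seq_equiv (canon X) X"
    using seq_equiv_sym assms hcauchy_range by blast+
qed

lemma canon_cong: assumes "hcauchy X" "hcauchy Y" "seq_equiv X Y" shows "canon X = canon Y"
proof -
  have "seq_equiv X Z \<longleftrightarrow> seq_equiv Y Z" if "hcauchy Z" for Z
    using assms that seq_equiv_sym seq_equiv_trans hcauchy_range by meson
  then show ?thesis unfolding canon_def by metis
qed

lemma canon_eq_if_limit_inner_eq:
  "hcauchy X \<Longrightarrow> hcauchy Y \<Longrightarrow> (\<And>Z. hcauchy Z \<Longrightarrow> limit_inner X Z = limit_inner Y Z) \<Longrightarrow> canon X = canon Y"
  by (intro canon_cong seq_equiv_if_limit_inner_eq)

lemma limit_inner_canon_left: "hcauchy X \<Longrightarrow> hcauchy Z \<Longrightarrow> limit_inner (canon X) Z = limit_inner X Z"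
  by (rule limit_inner_cong) (simp_all add: canon seq_equiv_refl hcauchy_range)

lemma limit_inner_canon_right: "hcauchy X \<Longrightarrow> hcauchy Z \<Longrightarrow> limit_inner Z (canon X) = limit_inner Z X"
  by (rule limit_inner_cong) (simp_all add: canon seq_equiv_refl hcauchy_range)

lemma canon_canon: "hcauchy X \<Longrightarrow> canon (canon X) = canon X"
  by (rule canon_cong) (simp_all add: canon)

definition completion :: "(nat \<Rightarrow> 'd) hspace" where
  "completion =
    \<lparr>hcarrier = canon ` Collect hcauchy,
     hadd = \<lambda>X Y. canon (\<lambda>n. hadd H (X n) (Y n)),
     hscale = \<lambda>c X. canon (\<lambda>n. hscale H c (X n)),
     hzero = canon (\<lambda>n. hzero H),
     hinner = limit_inner\<rparr>"

lemma completion_simps: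
  "hcarrier completion = canon ` Collect hcauchy"
  "hadd completion X Y = canon (\<lambda>n. hadd H (X n) (Y n))"
  "hscale completion c X = canon (\<lambda>n. hscale H c (X n))"
  "hzero completion = canon (\<lambda>n. hzero H)"
  "hinner completion = limit_inner"
  by (simp_all add: completion_def)

lemma completion_hcauchy: "X \<in> hcarrier completion \<Longrightarrow> hcauchy X"
  by (auto simp: completion_simps canon)

lemma completion_canon: "X \<in> hcarrier completion \<Longrightarrow> canon X = X"
  by (auto simp: completion_simps canon_canon)

lemma canon_in_completion: "hcauchy X \<Longrightarrow> canon X \<in> hcarrier completion"
  by (simp add: completion_simps)

lemma completion_eqI:
  "X \<in> hcarrier completion \<Longrightarrow> Y \<in> hcarrier completion \<Longrightarrow>
    (\<And>Z. hcauchy Z \<Longrightarrow> limit_inner X Z = limit_inner Y Z) \<Longrightarrow> X = Y"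
  by (metis completion_hcauchy completion_canon canon_eq_if_limit_inner_eq)

lemmas limit_inner_simps = limit_inner_add_left limit_inner_scale_left limit_inner_zero_left
  limit_inner_canon_left limit_inner_canon_right hcauchy_add hcauchy_scale canon hcauchy_const
  zero_in completion_hcauchy

lemma pre_hilbert_completion: "pre_hilbert completion"
proof (unfold_locales, unfold completion_simps)
  show "canon (\<lambda>n. hzero H) \<in> canon ` Collect hcauchy" by (simp add: hcauchy_const zero_in)
  fix X Y Z c
  assume X: "X \<in> canon ` Collect hcauchy" and Y: "Y \<in> canon ` Collect hcauchy"
    and Z: "Z \<in> canon ` Collect hcauchy"
  then have "hcauchy X" "hcauchy Y" "hcauchy Z" by (auto simp: canon)
  then show "canon (\<lambda>n. hadd H (X n) (Y n)) \<in> canon ` Collect hcauchy"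
    and "canon (\<lambda>n. hscale H c (X n)) \<in> canon ` Collect hcauchy"
    and "limit_inner (canon (\<lambda>n. hadd H (X n) (Y n))) Z = limit_inner X Z + limit_inner Y Z"
    and "limit_inner (canon (\<lambda>n. hscale H c (X n))) Y = c * limit_inner X Y"
    and "0 \<le> Re (limit_inner X X)"
    and "limit_inner (canon (\<lambda>n. hzero H)) X = 0"
    by (simp_all add: hcauchy_add hcauchy_scale limit_inner_add_left limit_inner_scale_left
        limit_inner_canon_left hcauchy_const zero_in limit_inner_zero_left
        limit_inner_self_nonneg)
  from \<open>hcauchy X\<close> \<open>hcauchy Y\<close> show "limit_inner X Y = cnj (limit_inner Y X)"
    by (rule limit_inner_commute)
qed


definition embed :: "'d \<Rightarrow> nat \<Rightarrow> 'd" where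
  "embed x = canon (\<lambda>n. x)"

lemma embed_in: "x \<in> hcarrier H \<Longrightarrow> embed x \<in> hcarrier completion"
  by (simp add: embed_def canon_in_completion hcauchy_const)

lemma hnorm_completion_diff_canon:
  assumes "hcauchy X" "hcauchy Y"
  shows "(\<lambda>n. hnorm H (hdiff H (X n) (Y n)))
    \<longlonglongrightarrow> hnorm completion (hdiff completion (canon X) (canon Y))"
proof -
  have "hdiff completion (canon X) (canon Y) = canon (\<lambda>n. hdiff H (X n) (Y n))"
    unfolding hdiff_def completion_simps
    by (rule canon_eq_if_limit_inner_eq) (use assms in \<open>simp_all add: limit_inner_simps\<close>)
  then show ?thesis
    using hnorm_tendsto[OF hcauchy_diff[OF assms]] assms
    by (simp add: hnorm_def completion_simps limit_inner_simps hcauchy_diff)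
qed

lemma hnorm_completion_diff_embed:
  "x \<in> hcarrier H \<Longrightarrow> y \<in> hcarrier H \<Longrightarrow>
    hnorm completion (hdiff completion (embed x) (embed y)) = hnorm H (hdiff H x y)"
  using hnorm_completion_diff_canon[of "\<lambda>n. x" "\<lambda>n. y"]
  by (simp add: embed_def hcauchy_const LIMSEQ_const_iff)

lemma hnorm_completion_diff_embed_le:
  assumes X: "X \<in> hcarrier completion" and N: "\<forall>n\<ge>N. hnorm H (hdiff H (X n) (X N)) \<le> e"
  shows "hnorm completion (hdiff completion X (embed (X N))) \<le> e"
proof -
  have "hcauchy X" using X by (rule completion_hcauchy)
  then have "(\<lambda>n. hnorm H (hdiff H (X n) (X N)))
      \<longlonglongrightarrow> hnorm completion (hdiff completion X (embed (X N)))"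
    using hnorm_completion_diff_canon[of X "\<lambda>n. X N"]
    by (simp add: completion_canon[OF X] embed_def hcauchy_const hcauchy_in)
  then show ?thesis using N by (intro Lim_bounded[of _ _ N]) auto
qed

lemma embed_dense:
  assumes X: "X \<in> hcarrier completion" and "e > 0"
  shows "\<exists>x\<in>hcarrier H. hnorm completion (hdiff completion X (embed x)) \<le> e"
proof -
  obtain N where "\<forall>m\<ge>N. \<forall>n\<ge>N. hnorm H (hdiff H (X m) (X n)) < e"
    using hcauchyD[OF completion_hcauchy[OF X] \<open>e > 0\<close>] by blast
  then have "hnorm completion (hdiff completion X (embed (X N))) \<le> e"
    by (intro hnorm_completion_diff_embed_le[OF X]) (simp add: less_imp_le)
  then show ?thesis using hcauchy_in[OF completion_hcauchy[OF X]] by blast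
qed

lemma hcauchy_if_close_to_Cauchy:
  assumes f: "\<And>k. f k \<in> hcarrier completion" and d: "\<And>k. d k \<in> hcarrier H"
    and close: "\<And>k. hnorm completion (hdiff completion (f k) (embed (d k))) \<le> inverse (Suc k)"
    and f_Cauchy: "\<And>e. e > 0 \<Longrightarrow>
      \<exists>N. \<forall>m\<ge>N. \<forall>n\<ge>N. hnorm completion (hdiff completion (f m) (f n)) < e"
  shows "hcauchy d"
  unfolding hcauchy_def
proof (intro conjI allI impI)
  interpret C: pre_hilbert completion by (rule pre_hilbert_completion)
  let ?dist = "\<lambda>X Y. hnorm completion (hdiff completion X Y)"
  show "range d \<subseteq> hcarrier H" using d by auto
  fix e :: real assume "e > 0"
  obtain M1 where M1: "inverse (real (Suc M1)) < e / 3"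
    using reals_Archimedean[of "e / 3"] \<open>e > 0\<close> by auto
  obtain M2 where M2: "\<forall>m\<ge>M2. \<forall>n\<ge>M2. ?dist (f m) (f n) < e / 3"
    using f_Cauchy[of "e / 3"] \<open>e > 0\<close> by auto
  have "hnorm H (hdiff H (d m) (d n)) < e" if "max M1 M2 \<le> m" "max M1 M2 \<le> n" for m n
  proof -
    have "hnorm H (hdiff H (d m) (d n)) = ?dist (embed (d m)) (embed (d n))"
      by (simp add: hnorm_completion_diff_embed d)
    also have "\<dots> \<le> ?dist (embed (d m)) (f m) + ?dist (f m) (embed (d n))"
      by (rule C.hnorm_diff_triangle) (simp_all add: embed_in d f)
    also have "?dist (f m) (embed (d n)) \<le> ?dist (f m) (f n) + ?dist (f n) (embed (d n))"
      by (rule C.hnorm_diff_triangle) (simp_all add: embed_in d f)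
    also have "?dist (embed (d m)) (f m) = ?dist (f m) (embed (d m))"
      by (simp add: C.hnorm_diff_commute embed_in d f)
    finally have "hnorm H (hdiff H (d m) (d n)) \<le>
        ?dist (f m) (embed (d m)) + ?dist (f m) (f n) + ?dist (f n) (embed (d n))" by simp
    moreover have "inverse (real (Suc m)) \<le> inverse (real (Suc M1))"
      "inverse (real (Suc n)) \<le> inverse (real (Suc M1))"
      using that by (simp_all add: inverse_Suc_antimono)
    ultimately show ?thesis using close[of m] close[of n] M1 M2[rule_format, of m n] that
      by linarith
  qed
  then show "\<exists>N. \<forall>m\<ge>N. \<forall>n\<ge>N. hnorm H (hdiff H (d m) (d n)) < e" by blast
qed

lemma completion_complete:
  assumes f: "\<And>k. f k \<in> hcarrier completion"
    and f_Cauchy: "\<And>e. e > 0 \<Longrightarrow>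
      \<exists>N. \<forall>m\<ge>N. \<forall>n\<ge>N. hnorm completion (hdiff completion (f m) (f n)) < e"
  shows "\<exists>X\<in>hcarrier completion. (\<lambda>n. hnorm completion (hdiff completion (f n) X)) \<longlonglongrightarrow> 0"
proof -
  interpret C: pre_hilbert completion by (rule pre_hilbert_completion)
  let ?dist = "\<lambda>X Y. hnorm completion (hdiff completion X Y)"
  obtain d where d: "\<And>k. d k \<in> hcarrier H"
    and close: "\<And>k. ?dist (f k) (embed (d k)) \<le> inverse (Suc k)"
  proof -
    have "\<forall>k. \<exists>x\<in>hcarrier H. ?dist (f k) (embed x) \<le> inverse (Suc k)"
      using embed_dense[OF f] by simp
    then show thesis using that by metis
  qed
  have "hcauchy d" using f d close f_Cauchy by (rule hcauchy_if_close_to_Cauchy)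
  have "(\<lambda>k. ?dist (f k) (canon d)) \<longlonglongrightarrow> 0"
  proof (rule LIMSEQ_I)
    fix e :: real assume "e > 0"
    obtain M1 where M1: "inverse (real (Suc M1)) < e / 2"
      using reals_Archimedean[of "e / 2"] \<open>e > 0\<close> by auto
    obtain M2 where M2: "\<forall>m\<ge>M2. \<forall>n\<ge>M2. hnorm H (hdiff H (d m) (d n)) < e / 2"
      using hcauchyD[OF \<open>hcauchy d\<close>, of "e / 2"] \<open>e > 0\<close> by auto
    have "norm (?dist (f k) (canon d)) < e" if k: "max M1 M2 \<le> k" for k
    proof -
      have "(\<lambda>n. hnorm H (hdiff H (d k) (d n))) \<longlonglongrightarrow> ?dist (embed (d k)) (canon d)"
        using hnorm_completion_diff_canon[of "\<lambda>n. d k" d] \<open>hcauchy d\<close>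
        by (simp add: embed_def hcauchy_const d)
      then have "?dist (embed (d k)) (canon d) \<le> e / 2"
        using M2 k by (intro Lim_bounded[of _ _ M2]) (auto intro: less_imp_le)
      moreover have
        "?dist (f k) (canon d) \<le> ?dist (f k) (embed (d k)) + ?dist (embed (d k)) (canon d)"
        using C.hnorm_diff_triangle embed_in d f canon_in_completion[OF \<open>hcauchy d\<close>] by blast
      moreover have "inverse (real (Suc k)) \<le> inverse (real (Suc M1))"
        using k by (simp add: inverse_Suc_antimono)
      ultimately have "?dist (f k) (canon d) < e" using close[of k] M1 by linarith
      moreover have "0 \<le> ?dist (f k) (canon d)"
        using C.hnorm_nonneg C.diff_in f canon_in_completion[OF \<open>hcauchy d\<close>] by blast
      ultimately show ?thesis by simp
    qed
    then show "\<exists>N. \<forall>k\<ge>N. norm (?dist (f k) (canon d) - 0) < e"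
      by (metis diff_zero max.boundedE)
  qed
  then show ?thesis using canon_in_completion[OF \<open>hcauchy d\<close>] by blast
qed

lemma is_chilbert_completion: "is_chilbert completion"
proof -
  interpret C: pre_hilbert completion by (rule pre_hilbert_completion)
  let ?C = "hcarrier completion"
  have zero_add: "hadd completion (hzero completion) X = X" if "X \<in> ?C" for X
  proof -
    have "hadd completion (hzero completion) X = canon X"
      unfolding completion_simps
      by (rule canon_eq_if_limit_inner_eq) (use that in \<open>simp_all add: limit_inner_simps\<close>)
    then show ?thesis using completion_canon[OF that] by simp
  qed
  have scale_one: "hscale completion 1 X = X" if "X \<in> ?C" for X
  proof -
    have "hscale completion 1 X = canon X"
      unfolding completion_simps
      by (rule canon_eq_if_limit_inner_eq) (use that in \<open>simp_all add: limit_inner_simps\<close>)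
    then show ?thesis using completion_canon[OF that] by simp
  qed
  have add_inverse: "hadd completion X (hscale completion (-1) X) = hzero completion"
    if "X \<in> ?C" for X
    unfolding completion_simps
    by (rule canon_eq_if_limit_inner_eq) (use that in \<open>simp_all add: limit_inner_simps\<close>)
  have definite: "X = hzero completion" if X: "X \<in> ?C" and "hinner completion X X = 0" for X
  proof (rule completion_eqI[OF X C.zero_in])
    have "hnorm completion X = 0" using that by (simp add: hnorm_def)
    then have "\<forall>Y\<in>?C. limit_inner X Y = 0" using C.hnorm_eq_0_iff X by (simp add: completion_simps)
    then have "limit_inner X (canon Z) = 0" if "hcauchy Z" for Z
      using canon_in_completion[OF that] by blast
    then show "limit_inner X Z = limit_inner (hzero completion) Z" if "hcauchy Z" for Z
      using that X by (simp add: completion_simps limit_inner_simps)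
  qed
  show ?thesis
  proof (rule C.is_chilbertI)
    fix X Y Z a b assume "X \<in> ?C" "Y \<in> ?C" "Z \<in> ?C"
    then show "hadd completion (hadd completion X Y) Z = hadd completion X (hadd completion Y Z)"
      and "hadd completion X Y = hadd completion Y X"
      and "hscale completion a (hadd completion X Y) =
        hadd completion (hscale completion a X) (hscale completion a Y)"
      and "hscale completion (a + b) X =
        hadd completion (hscale completion a X) (hscale completion b X)"
      and "hscale completion a (hscale completion b X) = hscale completion (a * b) X"
      by (simp_all only: completion_simps)
        (rule canon_eq_if_limit_inner_eq; auto simp: limit_inner_simps algebra_simps)+
  qed (simp_all add: zero_add add_inverse scale_one definite completion_complete)
qed

lemma hisometry_map_embed: "hisometry_map H completion embed"
  unfolding hisometry_map_def hlinear_def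
proof (intro conjI ballI allI)
  fix x y a assume x: "x \<in> hcarrier H" and y: "y \<in> hcarrier H"
  show "embed x \<in> hcarrier completion" using x by (rule embed_in)
  show "embed (hadd H x y) = hadd completion (embed x) (embed y)"
    unfolding embed_def completion_simps using x y
    by (intro canon_eq_if_limit_inner_eq) (simp_all add: limit_inner_simps add_in)
  show "embed (hscale H a x) = hscale completion a (embed x)"
    unfolding embed_def completion_simps using x
    by (intro canon_eq_if_limit_inner_eq) (simp_all add: limit_inner_simps scale_in)
  show "hnorm completion (embed x) = hnorm H x"
    using x by (simp add: hnorm_def embed_def completion_simps limit_inner_simps limit_inner_const)
qed


lemma canon_eq_if_null:
  "hcauchy X \<Longrightarrow> hcauchy Y \<Longrightarrow> (\<And>n. hnorm H (hdiff H (X n) (Y n)) = 0) \<Longrightarrow> canon X = canon Y"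
  by (intro canon_cong seq_equiv_if_null)

lemma hadd_completion_canon:
  "hcauchy X \<Longrightarrow> hcauchy Y \<Longrightarrow> hadd completion (canon X) (canon Y) = canon (\<lambda>n. hadd H (X n) (Y n))"
  unfolding completion_simps by (rule canon_eq_if_limit_inner_eq) (simp_all add: limit_inner_simps)

lemma hscale_completion_canon:
  "hcauchy X \<Longrightarrow> hscale completion c (canon X) = canon (\<lambda>n. hscale H c (X n))"
  unfolding completion_simps by (rule canon_eq_if_limit_inner_eq) (simp_all add: limit_inner_simps)

definition inner_preserving :: "('d \<Rightarrow> 'd) \<Rightarrow> bool" where
  "inner_preserving T \<longleftrightarrow> (\<forall>x\<in>hcarrier H. T x \<in> hcarrier H) \<and>
     (\<forall>x\<in>hcarrier H. \<forall>y\<in>hcarrier H. hinner H (T x) (T y) = hinner H x y)"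

definition extend :: "('d \<Rightarrow> 'd) \<Rightarrow> (nat \<Rightarrow> 'd) \<Rightarrow> nat \<Rightarrow> 'd" where
  "extend T X = canon (\<lambda>n. T (X n))"

context
  fixes T assumes T: "inner_preserving T"
begin

lemma inner_preserving_in: "x \<in> hcarrier H \<Longrightarrow> T x \<in> hcarrier H"
  using T by (simp add: inner_preserving_def)

lemma inner_preserving_inner:
  "x \<in> hcarrier H \<Longrightarrow> y \<in> hcarrier H \<Longrightarrow> hinner H (T x) (T y) = hinner H x y"
  using T by (simp add: inner_preserving_def)

lemma hnorm_diff_inner_preserving:
  "x \<in> hcarrier H \<Longrightarrow> y \<in> hcarrier H \<Longrightarrow> hnorm H (hdiff H (T x) (T y)) = hnorm H (hdiff H x y)"
  by (simp add: hnorm_def inner_simps inner_preserving_in inner_preserving_inner)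

lemma hcauchy_inner_preserving: "hcauchy X \<Longrightarrow> hcauchy (\<lambda>n. T (X n))"
  unfolding hcauchy_def
  by (auto simp: image_subset_iff hnorm_diff_inner_preserving inner_preserving_in)

lemma seq_equiv_inner_preserving:
  "range X \<subseteq> hcarrier H \<Longrightarrow> range Y \<subseteq> hcarrier H \<Longrightarrow> seq_equiv X Y \<Longrightarrow>
    seq_equiv (\<lambda>n. T (X n)) (\<lambda>n. T (Y n))"
  by (simp add: seq_equiv_def hnorm_diff_inner_preserving range_subsetD)

lemma inner_preserving_add_null:
  "x \<in> hcarrier H \<Longrightarrow> y \<in> hcarrier H \<Longrightarrow> hnorm H (hdiff H (T (hadd H x y)) (hadd H (T x) (T y))) = 0"
  by (simp add: hnorm_def inner_simps inner_preserving_in inner_preserving_inner algebra_simps)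

lemma inner_preserving_scale_null:
  "x \<in> hcarrier H \<Longrightarrow> hnorm H (hdiff H (T (hscale H c x)) (hscale H c (T x))) = 0"
  by (simp add: hnorm_def inner_simps inner_preserving_in inner_preserving_inner algebra_simps)

lemma extend_canon: "hcauchy X \<Longrightarrow> extend T (canon X) = canon (\<lambda>n. T (X n))"
  unfolding extend_def
  by (intro canon_cong seq_equiv_inner_preserving)
      (simp_all add: hcauchy_inner_preserving canon hcauchy_range)

lemma extend_in: "X \<in> hcarrier completion \<Longrightarrow> extend T X \<in> hcarrier completion"
  by (simp add: extend_def canon_in_completion hcauchy_inner_preserving completion_hcauchy)

lemma extend_add:
  assumes "X \<in> hcarrier completion" "Y \<in> hcarrier completion"
  shows "extend T (hadd completion X Y) = hadd completion (extend T X) (extend T Y)"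
proof -
  have X: "hcauchy X" and Y: "hcauchy Y" using assms by (simp_all add: completion_hcauchy)
  have "extend T (hadd completion X Y) = canon (\<lambda>n. T (hadd H (X n) (Y n)))"
    by (simp add: completion_simps extend_canon hcauchy_add X Y)
  also have "\<dots> = canon (\<lambda>n. hadd H (T (X n)) (T (Y n)))"
    using X Y
    by (intro canon_eq_if_null)
      (simp_all add: hcauchy_inner_preserving hcauchy_add hcauchy_in inner_preserving_add_null)
  also have "\<dots> = hadd completion (extend T X) (extend T Y)"
    by (simp add: extend_def hadd_completion_canon hcauchy_inner_preserving X Y)
  finally show ?thesis .
qed

lemma extend_scale:
  assumes "X \<in> hcarrier completion"
  shows "extend T (hscale completion c X) = hscale completion c (extend T X)"
proof -
  have X: "hcauchy X" using assms by (simp add: completion_hcauchy)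
  have "extend T (hscale completion c X) = canon (\<lambda>n. T (hscale H c (X n)))"
    by (simp add: completion_simps extend_canon hcauchy_scale X)
  also have "\<dots> = canon (\<lambda>n. hscale H c (T (X n)))"
    using X
    by (intro canon_eq_if_null)
      (simp_all add: hcauchy_inner_preserving hcauchy_scale hcauchy_in inner_preserving_scale_null)
  also have "\<dots> = hscale completion c (extend T X)"
    by (simp add: extend_def hscale_completion_canon hcauchy_inner_preserving X)
  finally show ?thesis .
qed

lemma extend_inner:
  assumes "X \<in> hcarrier completion" "Y \<in> hcarrier completion"
  shows "hinner completion (extend T X) (extend T Y) = hinner completion X Y"
proof -
  have X: "hcauchy X" and Y: "hcauchy Y" using assms by (simp_all add: completion_hcauchy)
  then have "hinner completion (extend T X) (extend T Y) = limit_inner (\<lambda>n. T (X n)) (\<lambda>n. T (Y n))"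
    by (simp add: completion_simps extend_def limit_inner_simps hcauchy_inner_preserving)
  also have "\<dots> = limit_inner X Y"
    using X Y by (simp add: limit_inner_def inner_preserving_inner hcauchy_in)
  finally show ?thesis by (simp add: completion_simps)
qed

lemma extend_embed: "x \<in> hcarrier H \<Longrightarrow> extend T (embed x) = embed (T x)"
  by (simp add: embed_def extend_canon hcauchy_const)

lemma canon_preimage:
  assumes X: "hcauchy X" and Y: "\<And>n. Y n \<in> hcarrier H"
    and null: "\<And>n. hnorm H (hdiff H (T (Y n)) (X n)) = 0"
  shows "hcauchy Y" and "extend T (canon Y) = canon X"
proof -
  have TY: "hinner H (T (Y n)) z = hinner H (X n) z" if "z \<in> hcarrier H" for n z
  proof -
    have "hinner H (hdiff H (T (Y n)) (X n)) z = 0"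
      using null[of n] hnorm_eq_0_iff[OF diff_in] that inner_preserving_in Y X hcauchy_in by blast
    then show ?thesis using that Y X by (simp add: inner_diff_left inner_preserving_in hcauchy_in)
  qed
  have "hnorm H (hdiff H (Y m) (Y n)) = hnorm H (hdiff H (X m) (X n))" for m n
  proof -
    have "hnorm H (hdiff H (Y m) (Y n)) = hnorm H (hdiff H (T (Y m)) (T (Y n)))"
      using Y by (simp add: hnorm_diff_inner_preserving)
    also have "\<dots> = hnorm H (hdiff H (X m) (X n))"
      using Y X by (intro hnorm_eq_if_inner_eq)
          (simp_all add: inner_simps TY hcauchy_in inner_preserving_in)
    finally show ?thesis .
  qed
  then show "hcauchy Y" using X Y by (auto simp: hcauchy_def)
  then show "extend T (canon Y) = canon X"
    using X Y null by (simp add: extend_canon canon_eq_if_null hcauchy_inner_preserving)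
qed

lemma extend_surj:
  assumes surj: "\<And>x. x \<in> hcarrier H \<Longrightarrow> \<exists>y\<in>hcarrier H. hnorm H (hdiff H (T y) x) = 0"
  shows "extend T ` hcarrier completion = hcarrier completion"
proof
  show "extend T ` hcarrier completion \<subseteq> hcarrier completion" using extend_in by blast
  show "hcarrier completion \<subseteq> extend T ` hcarrier completion"
  proof
    fix X assume "X \<in> hcarrier completion"
    then have X: "hcauchy X" and X_canon: "canon X = X"
      by (simp_all add: completion_hcauchy completion_canon)
    obtain g where g: "\<And>x. x \<in> hcarrier H \<Longrightarrow> g x \<in> hcarrier H \<and> hnorm H (hdiff H (T (g x)) x) = 0"
      using surj by metis
    have "hcauchy (\<lambda>n. g (X n))" and "extend T (canon (\<lambda>n. g (X n))) = X"
      using canon_preimage[of X "\<lambda>n. g (X n)"] g X X_canon by (simp_all add: hcauchy_in)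
    then show "X \<in> extend T ` hcarrier completion" using canon_in_completion by (metis image_eqI)
  qed
qed

end

lemma extend_commute:
  assumes T: "inner_preserving T" and S: "inner_preserving S" and X: "X \<in> hcarrier completion"
    and comm: "\<And>x. x \<in> hcarrier H \<Longrightarrow> T (S x) = hscale H c (S (T x))"
  shows "extend T (extend S X) = hscale completion c (extend S (extend T X))"
proof -
  have "hcauchy X" using X by (rule completion_hcauchy)
  have "extend T (extend S X) = extend T (canon (\<lambda>n. S (X n)))" by (simp add: extend_def)
  also have "\<dots> = canon (\<lambda>n. T (S (X n)))"
    using \<open>hcauchy X\<close> by (simp add: extend_canon[OF T] hcauchy_inner_preserving[OF S])
  also have "\<dots> = canon (\<lambda>n. hscale H c (S (T (X n))))"
    using comm \<open>hcauchy X\<close> by (simp add: hcauchy_in)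
  also have "\<dots> = hscale completion c (extend S (extend T X))"
    using \<open>hcauchy X\<close>
    by (simp add: extend_def[of T] extend_canon[OF S] hscale_completion_canon
        hcauchy_inner_preserving[OF T]
        hcauchy_inner_preserving[OF S])
  finally show ?thesis .
qed

lemma hunitary_extend:
  assumes T: "inner_preserving T"
    and surj: "\<And>x. x \<in> hcarrier H \<Longrightarrow> \<exists>y\<in>hcarrier H. hnorm H (hdiff H (T y) x) = 0"
  shows "hunitary completion (extend T)"
  unfolding hunitary_def hisometry_map_def hlinear_def
  using extend_in[OF T] extend_add[OF T] extend_scale[OF T] extend_surj[OF T surj]
  by (simp add: hnorm_def extend_inner[OF T])

end

section \<open>Ordered monomials\<close>

definition index_order :: "'l rel" where
  "index_order = (SOME r. Well_order r \<and> Field r = UNIV)"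

lemma index_order: "Well_order index_order" "Field index_order = UNIV"
proof -
  have "Well_order (index_order :: 'l rel) \<and> Field (index_order :: 'l rel) = UNIV"
    unfolding index_order_def by (rule someI_ex) (rule well_ordering)
  then show "Well_order (index_order :: 'l rel)" "Field (index_order :: 'l rel) = UNIV"
    by (rule conjunct1, rule conjunct2)
qed

lemma wo_rel_index_order: "wo_rel index_order"
  by (unfold_locales) (rule index_order(1))

lemma index_order_total: "(a, b) \<in> index_order \<or> (b, a) \<in> index_order"
  by (metis wo_rel.TOTALS wo_rel_index_order index_order(2) UNIV_I)

lemma index_order_refl: "(a, a) \<in> index_order"
  by (rule refl_onD[OF wo_rel.REFL[OF wo_rel_index_order]]) (simp add: index_order(2))

lemma index_order_minim_in: "A \<noteq> {} \<Longrightarrow> wo_rel.minim index_order A \<in> A"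
  by (rule wo_rel.minim_in[OF wo_rel_index_order]) (simp_all add: index_order(2))

lemma index_order_minim_least: "b \<in> A \<Longrightarrow> (wo_rel.minim index_order A, b) \<in> index_order"
  by (rule wo_rel.minim_least[OF wo_rel_index_order]) (simp_all add: index_order(2))

lemma index_order_equals_minim:
  "a \<in> A \<Longrightarrow> (\<And>b. b \<in> A \<Longrightarrow> (a, b) \<in> index_order) \<Longrightarrow> wo_rel.minim index_order A = a"
  by (rule wo_rel.equals_minim[OF wo_rel_index_order, symmetric]) (simp_all add: index_order(2))

definition index_less :: "'l \<Rightarrow> 'l \<Rightarrow> bool" (infix "\<prec>" 50) where
  "a \<prec> b \<longleftrightarrow> (a, b) \<in> index_order \<and> a \<noteq> b"

lemma index_less_irrefl: "\<not> a \<prec> a"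
  by (simp add: index_less_def)

lemma index_less_linear: "a \<noteq> b \<Longrightarrow> a \<prec> b \<or> b \<prec> a"
  by (metis index_less_def index_order_total)

lemma index_less_asym: "a \<prec> b \<Longrightarrow> \<not> b \<prec> a"
  by (metis antisymD wo_rel.ANTISYM wo_rel_index_order index_less_def)

lemma index_less_trans: "a \<prec> b \<Longrightarrow> b \<prec> c \<Longrightarrow> a \<prec> c"
  by (metis transD wo_rel.TRANS antisymD wo_rel.ANTISYM wo_rel_index_order index_less_def)

definition supp :: "('l \<Rightarrow> nat) \<Rightarrow> 'l set" where
  "supp n = {a. n a \<noteq> 0}"

definition lowest :: "('l \<Rightarrow> nat) \<Rightarrow> 'l" where
  "lowest n = wo_rel.minim index_order (supp n)"

lemma lowest:
  assumes "n \<noteq> 0"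
  shows lowest_nonzero: "n (lowest n) \<noteq> 0"
    and lowest_less: "n b \<noteq> 0 \<Longrightarrow> b \<noteq> lowest n \<Longrightarrow> lowest n \<prec> b"
proof -
  have "supp n \<noteq> {}" using assms by (auto simp: supp_def fun_eq_iff)
  then have "lowest n \<in> supp n" unfolding lowest_def by (rule index_order_minim_in)
  then show "n (lowest n) \<noteq> 0" by (simp add: supp_def)
  show "lowest n \<prec> b" if "n b \<noteq> 0" "b \<noteq> lowest n"
    using that index_order_minim_least[of b "supp n"] unfolding index_less_def lowest_def supp_def
    by (metis mem_Collect_eq)
qed

lemma lowest_eqI: "n a \<noteq> 0 \<Longrightarrow> (\<And>b. n b \<noteq> 0 \<Longrightarrow> b \<noteq> a \<Longrightarrow> a \<prec> b) \<Longrightarrow> lowest n = a"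
  unfolding lowest_def
  by (rule index_order_equals_minim) (simp_all add: supp_def, metis index_less_def index_order_refl)

definition basis :: "'l \<Rightarrow> 'l \<Rightarrow> nat" where
  "basis a = (\<lambda>b. if b = a then 1 else 0)"

lemma basis_nonzero: "basis a \<noteq> 0"
  by (simp add: basis_def fun_eq_iff)

lemma lowest_basis: "lowest (basis a) = a"
  by (rule lowest_eqI) (auto simp: basis_def)

definition drop_lowest :: "('l \<Rightarrow> nat) \<Rightarrow> 'l \<Rightarrow> nat" where
  "drop_lowest n = n(lowest n := n (lowest n) - 1)"

lemma drop_lowest_add_basis: "n \<noteq> 0 \<Longrightarrow> drop_lowest n + basis (lowest n) = n"
  using lowest_nonzero[of n] by (auto simp: fun_eq_iff drop_lowest_def basis_def)

lemma drop_lowest_basis: "drop_lowest (basis a) = 0"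
  unfolding drop_lowest_def lowest_basis by (simp add: fun_eq_iff basis_def)

lemma lowest_add_basis_below:
  assumes "\<And>c. p c \<noteq> 0 \<Longrightarrow> \<not> c \<prec> b"
  shows "lowest (p + basis b) = b" and "drop_lowest (p + basis b) = p"
proof -
  show low: "lowest (p + basis b) = b"
  proof (rule lowest_eqI)
    show "(p + basis b) b \<noteq> 0" by (simp add: basis_def)
    fix c assume "(p + basis b) c \<noteq> 0" "c \<noteq> b"
    then have "p c \<noteq> 0" by (simp add: basis_def)
    then show "b \<prec> c" using assms \<open>c \<noteq> b\<close> index_less_linear by metis
  qed
  show "drop_lowest (p + basis b) = p"
    unfolding drop_lowest_def low by (simp add: fun_eq_iff basis_def)
qed

lemma lowest_add_basis_above:
  assumes "p \<noteq> 0" "lowest p \<prec> b"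
  shows "lowest (p + basis b) = lowest p" and "drop_lowest (p + basis b) = drop_lowest p + basis b"
proof -
  show low: "lowest (p + basis b) = lowest p"
  proof (rule lowest_eqI)
    show "(p + basis b) (lowest p) \<noteq> 0" using lowest_nonzero[OF assms(1)] by simp
    fix c assume "(p + basis b) c \<noteq> 0" "c \<noteq> lowest p"
    then consider "p c \<noteq> 0" | "c = b" by (auto simp: basis_def split: if_splits)
    then show "lowest p \<prec> c" using lowest_less[OF assms(1)] assms(2) \<open>c \<noteq> lowest p\<close> by metis
  qed
  have "b \<noteq> lowest p" using assms(2) by (metis index_less_irrefl)
  then show "drop_lowest (p + basis b) = drop_lowest p + basis b"
    unfolding drop_lowest_def low by (simp add: fun_eq_iff basis_def)
qed

definition fin_supp :: "('l \<Rightarrow> nat) \<Rightarrow> bool" where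
  "fin_supp n \<longleftrightarrow> finite (supp n)"

lemma fin_supp_add: "fin_supp n \<Longrightarrow> fin_supp m \<Longrightarrow> fin_supp (n + m)"
proof -
  have "supp (n + m) = supp n \<union> supp m" by (auto simp: supp_def)
  then show "fin_supp n \<Longrightarrow> fin_supp m \<Longrightarrow> fin_supp (n + m)" by (simp add: fin_supp_def)
qed

lemma fin_supp_le:
  assumes "m \<le> n" "fin_supp n" shows "fin_supp m"
proof -
  have "supp m \<subseteq> supp n"
    using assms(1) unfolding supp_def le_fun_def by (metis (mono_tags) Collect_mono le_zero_eq)
  then show ?thesis using assms(2) finite_subset unfolding fin_supp_def by blast
qed

lemma fin_supp_diff: "fin_supp n \<Longrightarrow> fin_supp (n - m)"
  by (rule fin_supp_le[of _ n]) (auto simp: le_fun_def)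

lemma fin_supp_basis: "fin_supp (basis a)"
  by (simp add: fin_supp_def supp_def basis_def)

lemma fin_supp_0: "fin_supp 0"
  by (simp add: fin_supp_def supp_def)

lemma fin_supp_drop_lowest: "fin_supp n \<Longrightarrow> fin_supp (drop_lowest n)"
  by (rule fin_supp_le[of _ n]) (auto simp: le_fun_def drop_lowest_def)

definition degree :: "('l \<Rightarrow> nat) \<Rightarrow> nat" where
  "degree n = sum n (supp n)"

lemma degree_drop_lowest:
  assumes "fin_supp n" "n \<noteq> 0"
  shows "degree n = Suc (degree (drop_lowest n))"
proof -
  let ?a = "lowest n"
  have fin: "finite (supp n)" using assms(1) by (simp add: fin_supp_def)
  have a: "?a \<in> supp n" using lowest_nonzero[OF assms(2)] by (simp add: supp_def)
  have "degree (drop_lowest n) = sum (drop_lowest n) (supp n)"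
    unfolding degree_def
    by (rule sum.mono_neutral_left[OF fin]) (auto simp: supp_def drop_lowest_def)
  also have "\<dots> = drop_lowest n ?a + sum (drop_lowest n) (supp n - {?a})"
    by (rule sum.remove[OF fin a])
  also have "sum (drop_lowest n) (supp n - {?a}) = sum n (supp n - {?a})"
    by (rule sum.cong) (auto simp: drop_lowest_def)
  also have "drop_lowest n ?a = n ?a - 1" by (simp add: drop_lowest_def)
  moreover have "degree n = n ?a + sum n (supp n - {?a})"
    unfolding degree_def by (rule sum.remove[OF fin a])
  ultimately show ?thesis using lowest_nonzero[OF assms(2)] by simp
qed

lemma fin_supp_induct [consumes 1, case_names zero drop_lowest]:
  assumes "fin_supp n" "P 0"
    and step: "\<And>n. fin_supp n \<Longrightarrow> n \<noteq> 0 \<Longrightarrow> P (drop_lowest n) \<Longrightarrow> P n"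
  shows "P n"
  using assms(1)
proof (induction "degree n" arbitrary: n)
  case 0
  then have "n = 0" by (auto simp: degree_def fin_supp_def supp_def fun_eq_iff)
  then show ?case using assms(2) by (simp only:)
next
  case (Suc k)
  then have "n \<noteq> 0" by (auto simp: degree_def)
  moreover have "k = degree (drop_lowest n)"
    using Suc.hyps(2) degree_drop_lowest[OF Suc.prems \<open>n \<noteq> 0\<close>] by simp
  then have "P (drop_lowest n)" using Suc.hyps(1) fin_supp_drop_lowest[OF Suc.prems] by blast
  ultimately show ?case using Suc.prems by (rule_tac step)
qed

function ordered_monomial :: "('l \<Rightarrow> 'a \<Rightarrow> 'a) \<Rightarrow> ('l \<Rightarrow> nat) \<Rightarrow> 'a \<Rightarrow> 'a" where
  "ordered_monomial V n =
    (if n = 0 \<or> \<not> fin_supp n then id else V (lowest n) \<circ> ordered_monomial V (drop_lowest n))"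
  by auto
termination
  by (relation "measure (\<lambda>(V, n). degree n)") (auto simp: degree_drop_lowest)

declare ordered_monomial.simps [simp del]

lemma ordered_monomial_0: "ordered_monomial V 0 = id"
  by (simp add: ordered_monomial.simps)

lemma ordered_monomial_drop_lowest:
  "fin_supp n \<Longrightarrow> n \<noteq> 0 \<Longrightarrow> ordered_monomial V n = V (lowest n) \<circ> ordered_monomial V (drop_lowest n)"
  by (simp add: ordered_monomial.simps)

lemma ordered_monomial_basis: "ordered_monomial V (basis a) = V a"
  by (simp add: ordered_monomial_drop_lowest fin_supp_basis basis_nonzero lowest_basis
      drop_lowest_basis ordered_monomial_0)

text \<open>The phase in \<open>W n \<circ> W m = twist q n m \<cdot> W (n + m)\<close> for ordered monomials \<open>W\<close>: each factor
\<open>V b\<close> of \<open>W m\<close> is moved to the left past each factor \<open>V a\<close> of \<open>W n\<close> with \<open>b \<prec> a\<close>.\<close>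

definition twist :: "('l \<Rightarrow> 'l \<Rightarrow> complex) \<Rightarrow> ('l \<Rightarrow> nat) \<Rightarrow> ('l \<Rightarrow> nat) \<Rightarrow> complex" where
  "twist q n m = (\<Prod>(a, b) \<in> {(a, b) \<in> supp n \<times> supp m. b \<prec> a}. q a b ^ (n a * m b))"

lemma twist_eq_prod:
  assumes "finite F" "supp n \<subseteq> F" "supp m \<subseteq> F"
  shows "twist q n m = (\<Prod>(a, b) \<in> {(a, b) \<in> F \<times> F. b \<prec> a}. q a b ^ (n a * m b))"
  unfolding twist_def
proof (rule prod.mono_neutral_left)
  show "finite {(a, b) \<in> F \<times> F. b \<prec> a}"
    by (rule finite_subset[of _ "F \<times> F"]) (auto simp: assms(1))
qed (use assms(2,3) in \<open>auto simp: supp_def intro!: gr0I\<close>)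

lemma twist_add_left:
  assumes "fin_supp n" "fin_supp n'" "fin_supp m"
  shows "twist q (n + n') m = twist q n m * twist q n' m"
proof -
  let ?F = "supp n \<union> supp n' \<union> supp m"
  let ?P = "{(a, b) \<in> ?F \<times> ?F. b \<prec> a}"
  have F: "finite ?F" using assms by (simp add: fin_supp_def)
  have "twist q (n + n') m = (\<Prod>(a, b) \<in> ?P. q a b ^ ((n + n') a * m b))"
    by (rule twist_eq_prod[OF F]) (auto simp: supp_def)
  also have "\<dots> = (\<Prod>(a, b) \<in> ?P. q a b ^ (n a * m b)) * (\<Prod>(a, b) \<in> ?P. q a b ^ (n' a * m b))"
    by (simp add: prod.distrib[symmetric] power_add distrib_right case_prod_beta)
  also have "\<dots> = twist q n m * twist q n' m"
    by (subst (1 2) twist_eq_prod[OF F]) auto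
  finally show ?thesis .
qed

lemma twist_add_right:
  assumes "fin_supp n" "fin_supp m" "fin_supp m'"
  shows "twist q n (m + m') = twist q n m * twist q n m'"
proof -
  let ?F = "supp n \<union> supp m \<union> supp m'"
  let ?P = "{(a, b) \<in> ?F \<times> ?F. b \<prec> a}"
  have F: "finite ?F" using assms by (simp add: fin_supp_def)
  have "twist q n (m + m') = (\<Prod>(a, b) \<in> ?P. q a b ^ (n a * (m + m') b))"
    by (rule twist_eq_prod[OF F]) (auto simp: supp_def)
  also have "\<dots> = (\<Prod>(a, b) \<in> ?P. q a b ^ (n a * m b)) * (\<Prod>(a, b) \<in> ?P. q a b ^ (n a * m' b))"
    by (simp add: prod.distrib[symmetric] power_add distrib_left case_prod_beta)
  also have "\<dots> = twist q n m * twist q n m'"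
    by (subst (1 2) twist_eq_prod[OF F]) auto
  finally show ?thesis .
qed

lemma twist_0_left [simp]: "twist q 0 m = 1"
  by (simp add: twist_def supp_def)

lemma twist_0_right [simp]: "twist q n 0 = 1"
  by (simp add: twist_def supp_def)

lemma twist_unimodular:
  assumes "\<And>a b. a \<noteq> b \<Longrightarrow> cmod (q a b) = 1"
  shows "cmod (twist q n m) = 1"
proof -
  have "cmod (q a b ^ (n a * m b)) = 1" if "b \<prec> a" for a b
  proof -
    have "a \<noteq> b" using that by (metis index_less_irrefl)
    then show ?thesis by (simp add: norm_power assms)
  qed
  then show ?thesis
    unfolding twist_def prod_norm[symmetric] by (intro prod.neutral) auto
qed

lemma twist_basis_basis: "b \<prec> a \<Longrightarrow> twist q (basis a) (basis b) = q a b"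
proof -
  assume "b \<prec> a"
  then have "{(c, d) \<in> supp (basis a) \<times> supp (basis b). d \<prec> c} = {(a, b)}"
    by (auto simp: supp_def basis_def)
  then show ?thesis by (simp add: twist_def basis_def)
qed

lemma twist_basis_left_eq_1: "(\<And>c. m c \<noteq> 0 \<Longrightarrow> \<not> c \<prec> a) \<Longrightarrow> twist q (basis a) m = 1"
  unfolding twist_def by (rule prod.neutral) (auto simp: supp_def basis_def)

section \<open>The dilation\<close>

locale q_commuting_isometries =
  fixes H :: "'h hspace" and q :: "'l \<Rightarrow> 'l \<Rightarrow> complex" and V :: "'l \<Rightarrow> 'h \<Rightarrow> 'h"
  assumes chilbert: "is_chilbert H"
    and q_unimodular: "\<And>a b. a \<noteq> b \<Longrightarrow> cmod (q a b) = 1"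
    and isometry: "\<And>a. hisometry H (V a)"
    and commute: "\<And>a b x. a \<noteq> b \<Longrightarrow> x \<in> hcarrier H \<Longrightarrow> V a (V b x) = hscale H (q a b) (V b (V a x))"
begin

sublocale H: pre_hilbert H
  by (rule chilbert_pre_hilbert[OF chilbert])

lemmas hscale_hscale = is_chilbertD(6)[OF chilbert]
lemmas hscale_one = is_chilbertD(7)[OF chilbert]
lemmas hscale_hadd = is_chilbertD(5)[OF chilbert]

abbreviation W :: "('l \<Rightarrow> nat) \<Rightarrow> 'h \<Rightarrow> 'h" where
  "W \<equiv> ordered_monomial V"

lemma hisometry_W: "fin_supp n \<Longrightarrow> hisometry H (W n)"
proof (induction n rule: fin_supp_induct)
  case zero
  show ?case unfolding ordered_monomial_0 by (rule hisometry_id)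
next
  case (drop_lowest n)
  then show ?case
    using isometry hisometry_map_comp
    unfolding ordered_monomial_drop_lowest[OF drop_lowest.hyps] hisometry_def
    by blast
qed

context
  fixes n :: "'l \<Rightarrow> nat" assumes n: "fin_supp n"
begin

lemma W_in: "x \<in> hcarrier H \<Longrightarrow> W n x \<in> hcarrier H"
  using hisometry_W[OF n] by (simp add: hisometry_def hisometry_map_def hlinear_def)

lemma W_add: "x \<in> hcarrier H \<Longrightarrow> y \<in> hcarrier H \<Longrightarrow> W n (hadd H x y) = hadd H (W n x) (W n y)"
  using hisometry_W[OF n] by (simp add: hisometry_def hisometry_map_def hlinear_def)

lemma W_scale: "x \<in> hcarrier H \<Longrightarrow> W n (hscale H c x) = hscale H c (W n x)"
  using hisometry_W[OF n] by (simp add: hisometry_def hisometry_map_def hlinear_def)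

lemma W_inner: "x \<in> hcarrier H \<Longrightarrow> y \<in> hcarrier H \<Longrightarrow> hinner H (W n x) (W n y) = hinner H x y"
  using hisometry_map_inner[OF H.pre_hilbert_axioms H.pre_hilbert_axioms] hisometry_W[OF n]
  by (simp add: hisometry_def)

end

lemma V_in: "x \<in> hcarrier H \<Longrightarrow> V a x \<in> hcarrier H"
  using W_in[OF fin_supp_basis] by (simp add: ordered_monomial_basis)

lemma V_scale: "x \<in> hcarrier H \<Longrightarrow> V a (hscale H c x) = hscale H c (V a x)"
  using W_scale[OF fin_supp_basis] by (simp add: ordered_monomial_basis)

lemma V_W_twist:
  assumes "fin_supp p" "x \<in> hcarrier H"
  shows "V b (W p x) = hscale H (twist q (basis b) p) (W (p + basis b) x)"
  using assms
proof (induction p arbitrary: x rule: fin_supp_induct)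
  case zero
  then show ?case
    unfolding ordered_monomial_0 add_0 ordered_monomial_basis twist_0_right
    by (simp add: hscale_one V_in)
next
  case (drop_lowest p)
  let ?a = "lowest p" and ?d = "drop_lowest p"
  have fin: "fin_supp (p + basis b)" using drop_lowest.hyps(1) fin_supp_basis by (rule fin_supp_add)
  have nonzero: "p + basis b \<noteq> 0" by (auto simp: fun_eq_iff basis_def)
  show ?case
  proof (cases "?a \<prec> b")
    case False
    then have below: "\<not> c \<prec> b" if "p c \<noteq> 0" for c
      using lowest_less[OF drop_lowest.hyps(2) that] index_less_trans by metis
    have W_pb: "W (p + basis b) = V b \<circ> W p"
      using ordered_monomial_drop_lowest[OF fin nonzero] lowest_add_basis_below[OF below] by simp
    have "twist q (basis b) p = 1" using below by (rule twist_basis_left_eq_1)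
    then show ?thesis unfolding W_pb comp_apply
      using drop_lowest.prems by (simp add: hscale_one V_in W_in[OF drop_lowest.hyps(1)])
  next
    case True
    have fin_d: "fin_supp ?d" using drop_lowest.hyps(1) by (rule fin_supp_drop_lowest)
    have "b \<noteq> ?a" using True by (metis index_less_irrefl)
    have W_p: "W p = V ?a \<circ> W ?d" by (rule ordered_monomial_drop_lowest[OF drop_lowest.hyps(1,2)])
    have W_pb: "W (p + basis b) = V ?a \<circ> W (?d + basis b)"
      using ordered_monomial_drop_lowest[OF fin nonzero]
          lowest_add_basis_above[OF drop_lowest.hyps(2) True]
      by simp
    have "twist q (basis b) p = twist q (basis b) (?d + basis ?a)"
      using drop_lowest_add_basis[OF drop_lowest.hyps(2)] by simp
    also have "\<dots> = twist q (basis b) ?d * q b ?a"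
      by (simp add: twist_add_right fin_supp_basis fin_d twist_basis_basis[OF True])
    finally have twist: "twist q (basis b) p = q b ?a * twist q (basis b) ?d" by simp
    have Wd: "W ?d x \<in> hcarrier H" and Wdb: "W (?d + basis b) x \<in> hcarrier H"
      using drop_lowest.prems fin_d by (simp_all add: W_in fin_supp_add fin_supp_basis)
    have "V b (W p x) = V b (V ?a (W ?d x))" using W_p by simp
    also have "\<dots> = hscale H (q b ?a) (V ?a (V b (W ?d x)))" using \<open>b \<noteq> ?a\<close> Wd by (rule commute)
    also have "V b (W ?d x) = hscale H (twist q (basis b) ?d) (W (?d + basis b) x)"
      using drop_lowest.IH drop_lowest.prems by blast
    also have "hscale H (q b ?a) (V ?a (hscale H (twist q (basis b) ?d) (W (?d + basis b) x))) =
        hscale H (twist q (basis b) p) (W (p + basis b) x)"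
      using Wdb by (simp add: V_scale hscale_hscale V_in W_pb twist)
    finally show ?thesis .
  qed
qed

lemma W_W_twist:
  assumes "fin_supp n" "fin_supp m" "x \<in> hcarrier H"
  shows "W n (W m x) = hscale H (twist q n m) (W (n + m) x)"
  using assms(1)
proof (induction n rule: fin_supp_induct)
  case zero
  show ?case unfolding ordered_monomial_0 add_0 twist_0_left using assms
    by (simp add: hscale_one W_in)
next
  case (drop_lowest n)
  let ?a = "lowest n" and ?d = "drop_lowest n"
  have fin_d: "fin_supp ?d" using drop_lowest.hyps(1) by (rule fin_supp_drop_lowest)
  have n_eq: "?d + basis ?a = n" by (rule drop_lowest_add_basis[OF drop_lowest.hyps(2)])
  have low: "twist q (basis ?a) ?d = 1"
  proof (rule twist_basis_left_eq_1)
    fix c assume "?d c \<noteq> 0"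
    then have "n c \<noteq> 0" by (auto simp: drop_lowest_def split: if_splits)
    then show "\<not> c \<prec> ?a"
      using lowest_less[OF drop_lowest.hyps(2)] index_less_asym index_less_irrefl by metis
  qed
  have "twist q n m = twist q (?d + basis ?a) m" using n_eq by simp
  also have "\<dots> = twist q ?d m * twist q (basis ?a) m"
    by (rule twist_add_left[OF fin_d fin_supp_basis assms(2)])
  also have "twist q (basis ?a) m = twist q (basis ?a) (?d + m)"
    using twist_add_right[OF fin_supp_basis fin_d assms(2)] low by simp
  finally have twist: "twist q n m = twist q ?d m * twist q (basis ?a) (?d + m)" .
  have sum_eq: "?d + m + basis ?a = n + m" using n_eq by (simp add: algebra_simps)
  have Wdm: "W (?d + m) x \<in> hcarrier H" using assms(3)
    by (simp add: W_in fin_supp_add fin_d assms(2))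
  have "W n (W m x) = V ?a (W ?d (W m x))"
    by (simp add: ordered_monomial_drop_lowest[OF drop_lowest.hyps(1,2)])
  also have "\<dots> = V ?a (hscale H (twist q ?d m) (W (?d + m) x))" using drop_lowest.IH
    by (simp add: plus_fun_def)
  also have "\<dots> = hscale H (twist q ?d m) (V ?a (W (?d + m) x))" using Wdm by (rule V_scale)
  also have "V ?a (W (?d + m) x) = hscale H (twist q (basis ?a) (?d + m)) (W (n + m) x)"
    using V_W_twist[OF fin_supp_add[OF fin_d assms(2)] assms(3), where b = "lowest n"]
    unfolding sum_eq .
  also have "hscale H (twist q ?d m) (hscale H (twist q (basis ?a) (?d + m)) (W (n + m) x)) =
      hscale H (twist q n m) (W (n + m) x)"
    unfolding twist
    by (rule hscale_hscale[OF W_in[OF fin_supp_add[OF drop_lowest.hyps(1) assms(2)] assms(3)]])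
  finally show ?case .
qed

lemma twist_mult_cnj: "twist q n m * cnj (twist q n m) = 1"
  by (simp add: complex_norm_square[symmetric] twist_unimodular[OF q_unimodular])

lemma twist_cnj_mult: "cnj (twist q n m) * twist q n m = 1"
  by (simp add: complex_norm_square[symmetric] twist_unimodular[OF q_unimodular] mult.commute)

text \<open>In the dilation, a pair \<open>(n, h)\<close> stands for \<open>U\<^sub>n\<^sup>* h\<close>, where \<open>U\<^sub>n\<close> is the
unitary ordered monomial; for \<open>n \<le> P\<close>, the identity
\<open>U\<^sub>P U\<^sub>n\<^sup>* = cnj (twist q (P - n) n) \<cdot> U\<^bsub>P - n\<^esub>\<close> identifies it with \<open>(P, connect P n h)\<close>.\<close>

definition connect :: "('l \<Rightarrow> nat) \<Rightarrow> ('l \<Rightarrow> nat) \<Rightarrow> 'h \<Rightarrow> 'h" where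
  "connect P n h = hscale H (cnj (twist q (P - n) n)) (W (P - n) h)"

context
  fixes P :: "'l \<Rightarrow> nat" assumes P: "fin_supp P"
begin

lemma connect_in: "h \<in> hcarrier H \<Longrightarrow> connect P n h \<in> hcarrier H"
  unfolding connect_def by (intro H.scale_in W_in fin_supp_diff P)

lemma connect_add:
  "h \<in> hcarrier H \<Longrightarrow> k \<in> hcarrier H \<Longrightarrow>
    connect P n (hadd H h k) = hadd H (connect P n h) (connect P n k)"
  unfolding connect_def by (simp add: W_add fin_supp_diff P hscale_hadd W_in)

lemma connect_scale: "h \<in> hcarrier H \<Longrightarrow> connect P n (hscale H c h) = hscale H c (connect P n h)"
  unfolding connect_def by (simp add: W_scale fin_supp_diff P hscale_hscale W_in mult.commute)

lemma connect_inner: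
  "u \<in> hcarrier H \<Longrightarrow> v \<in> hcarrier H \<Longrightarrow> hinner H (connect P n u) (connect P n v) = hinner H u v"
  unfolding connect_def
  by (simp add: H.inner_simps W_in fin_supp_diff P W_inner mult.assoc[symmetric] twist_mult_cnj)

lemma connect_trans:
  assumes "n \<le> p" "p \<le> P" "h \<in> hcarrier H"
  shows "connect P p (connect p n h) = connect P n h"
proof -
  define a where "a = P - p"
  define b where "b = p - n"
  have fin_p: "fin_supp p" using fin_supp_le assms(2) P by blast
  have fin_n: "fin_supp n" using fin_supp_le assms(1) fin_p by blast
  have fin_a: "fin_supp a" and fin_b: "fin_supp b" using fin_supp_diff P fin_p a_def b_def by auto
  have p_eq: "p = b + n" and ab: "a + b = P - n" using assms(1,2)
    by (auto simp: a_def b_def le_fun_def fun_eq_iff)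
  have Wb: "W b h \<in> hcarrier H" using W_in fin_b assms(3) by blast
  have "connect P p (connect p n h) = hscale H (cnj (twist q a p))
      (W a (hscale H (cnj (twist q b n)) (W b h)))"
    unfolding connect_def a_def b_def by simp
  also have "\<dots> = hscale H (cnj (twist q a p) * cnj (twist q b n) * twist q a b) (W (a + b) h)"
    using Wb by (simp add: W_scale[OF fin_a] W_W_twist[OF fin_a fin_b assms(3)] hscale_hscale
        W_in fin_a
        fin_supp_add fin_b assms(3) mult.assoc)
  also have "cnj (twist q a p) * cnj (twist q b n) * twist q a b = cnj (twist q (P - n) n)"
  proof -
    have "twist q a p = twist q a b * twist q a n"
      using p_eq twist_add_right[OF fin_a fin_b fin_n] by simp
    moreover have "twist q (P - n) n = twist q a n * twist q b n"
      using ab twist_add_left[OF fin_a fin_b fin_n] by simp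
    ultimately show ?thesis using twist_cnj_mult[of a b] by (simp add: algebra_simps)
  qed
  finally show ?thesis unfolding ab by (simp only: connect_def)
qed

end

lemma connect_self: "h \<in> hcarrier H \<Longrightarrow> connect P P h = h"
proof -
  have "P - P = 0" by (simp add: fun_eq_iff)
  then show "h \<in> hcarrier H \<Longrightarrow> connect P P h = h"
    unfolding connect_def by (simp add: ordered_monomial_0 hscale_one)
qed


text \<open>Levels are stored as nonnegative integer functions to match the type of the dilation
space in the final theorem.\<close>

definition level :: "('l \<Rightarrow> int) \<times> 'h \<Rightarrow> 'l \<Rightarrow> nat" where
  "level x = (\<lambda>a. nat (fst x a))"

definition dilation_space :: "(('l \<Rightarrow> int) \<times> 'h) hspace" where
  "dilation_space =
    \<lparr>hcarrier = {x. (\<forall>a. 0 \<le> fst x a) \<and> fin_supp (level x) \<and> snd x \<in> hcarrier H},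
     hadd = \<lambda>x y. (fst x + fst y,
       hadd H (connect (level x + level y) (level x) (snd x))
           (connect (level x + level y) (level y) (snd y))),
     hscale = \<lambda>c x. (fst x, hscale H c (snd x)),
     hzero = (0, hzero H),
     hinner = \<lambda>x y.
       hinner H (connect (level x + level y) (level x) (snd x))
           (connect (level x + level y) (level y) (snd y))\<rparr>"

abbreviation (input) D where "D \<equiv> dilation_space"

lemma dilation_space_simps:
  "hcarrier D = {x. (\<forall>a. 0 \<le> fst x a) \<and> fin_supp (level x) \<and> snd x \<in> hcarrier H}"
  "hadd D x y = (fst x + fst y,
     hadd H (connect (level x + level y) (level x) (snd x))
         (connect (level x + level y) (level y) (snd y)))"
  "hscale D c x = (fst x, hscale H c (snd x))"
  "hzero D = (0, hzero H)"
  "hinner D x y =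
     hinner H (connect (level x + level y) (level x) (snd x))
         (connect (level x + level y) (level y) (snd y))"
  by (simp_all add: dilation_space_def)

lemma dilation_carrierD:
  "x \<in> hcarrier D \<Longrightarrow> fin_supp (level x)" "x \<in> hcarrier D \<Longrightarrow> snd x \<in> hcarrier H"
  "x \<in> hcarrier D \<Longrightarrow> 0 \<le> fst x a"
  by (simp_all add: dilation_space_simps)

lemma level_add: "x \<in> hcarrier D \<Longrightarrow> y \<in> hcarrier D \<Longrightarrow> level (hadd D x y) = level x + level y"
  by (simp add: level_def dilation_space_simps fun_eq_iff nat_add_distrib)

lemma dilation_inner_at:
  assumes x: "x \<in> hcarrier D" and y: "y \<in> hcarrier D"
    and P: "fin_supp P" "level x \<le> P" "level y \<le> P"
  shows "hinner D x y = hinner H (connect P (level x) (snd x)) (connect P (level y) (snd y))"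
proof -
  let ?n = "level x" and ?m = "level y"
  define Q where "Q = P + (?n + ?m)"
  have fin: "fin_supp ?n" "fin_supp ?m" and h: "snd x \<in> hcarrier H" "snd y \<in> hcarrier H"
    using x y by (simp_all add: dilation_carrierD)
  have fin_Q: "fin_supp Q" unfolding Q_def using P fin by (intro fin_supp_add)
  have fin_nm: "fin_supp (?n + ?m)" using fin by (rule fin_supp_add)
  have le: "P \<le> Q" "?n + ?m \<le> Q" "?n \<le> ?n + ?m" "?m \<le> ?n + ?m" unfolding Q_def
    by (simp_all add: le_fun_def)
  have "hinner D x y =
      hinner H (connect Q (?n + ?m) (connect (?n + ?m) ?n (snd x)))
          (connect Q (?n + ?m) (connect (?n + ?m) ?m (snd y)))"
    by (simp add: dilation_space_simps connect_inner fin_Q connect_in fin_nm h)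
  also have "\<dots> = hinner H (connect Q ?n (snd x)) (connect Q ?m (snd y))"
    using le by (simp add: connect_trans fin_Q h)
  also have "\<dots> = hinner H (connect Q P (connect P ?n (snd x))) (connect Q P (connect P ?m (snd y)))"
    using le P by (simp add: connect_trans fin_Q h)
  also have "\<dots> = hinner H (connect P ?n (snd x)) (connect P ?m (snd y))"
    by (simp add: connect_inner fin_Q connect_in P h)
  finally show ?thesis .
qed

lemma dilation_add_in:
  assumes x: "x \<in> hcarrier D" and y: "y \<in> hcarrier D"
  shows "hadd D x y \<in> hcarrier D"
proof -
  have fin: "fin_supp (level x + level y)"
    using x y by (simp add: dilation_carrierD fin_supp_add)
  have "snd (hadd D x y) \<in> hcarrier H"
    using x y by (simp add: dilation_space_simps(2) H.add_in connect_in[OF fin] dilation_carrierD)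
  moreover have "0 \<le> fst (hadd D x y) a" for a
    using dilation_carrierD(3)[OF x] dilation_carrierD(3)[OF y]
    by (simp add: dilation_space_simps(2))
  ultimately show ?thesis
    using level_add[OF x y] fin by (simp add: dilation_space_simps(1))
qed

lemma dilation_inner_add_left:
  assumes x: "x \<in> hcarrier D" and y: "y \<in> hcarrier D" and z: "z \<in> hcarrier D"
  shows "hinner D (hadd D x y) z = hinner D x z + hinner D y z"
proof -
  let ?n = "level x" and ?m = "level y" and ?r = "level z" and ?P = "level x + level y + level z"
  have fin: "fin_supp ?n" "fin_supp ?m" "fin_supp ?r"
    and h: "snd x \<in> hcarrier H" "snd y \<in> hcarrier H" "snd z \<in> hcarrier H"
    using x y z by (simp_all add: dilation_carrierD)
  have fin_P: "fin_supp ?P" and fin_nm: "fin_supp (?n + ?m)" using fin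
    by (simp_all add: fin_supp_add)
  have "hinner D (hadd D x y) z =
      hinner H (connect ?P (?n + ?m) (snd (hadd D x y))) (connect ?P ?r (snd z))"
    using dilation_inner_at[OF dilation_add_in[OF x y] z fin_P] level_add[OF x y]
    by (simp add: le_fun_def)
  also have "connect ?P (?n + ?m) (snd (hadd D x y)) =
      hadd H (connect ?P ?n (snd x)) (connect ?P ?m (snd y))"
    by (simp add: dilation_space_simps connect_add fin_P connect_in fin_nm h connect_trans
        le_fun_def)
  also have "hinner H (hadd H (connect ?P ?n (snd x)) (connect ?P ?m (snd y)))
      (connect ?P ?r (snd z)) =
      hinner D x z + hinner D y z"
    by (simp add: H.inner_add_left connect_in fin_P h dilation_inner_at[OF _ z fin_P] x y
        le_fun_def)
  finally show ?thesis .
qed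

lemma dilation_inner_zero_left:
  assumes x: "x \<in> hcarrier D" shows "hinner D (hzero D) x = 0"
proof -
  let ?n = "level x"
  have fin: "fin_supp ?n" and h: "snd x \<in> hcarrier H" using x by (simp_all add: dilation_carrierD)
  have "level (hzero D) = 0" by (simp add: level_def dilation_space_simps zero_fun_def)
  then have "hinner D (hzero D) x = hinner H (connect ?n 0 (hzero H)) (connect ?n ?n (snd x))"
    by (simp add: dilation_space_simps)
  moreover have "hnorm H (connect ?n 0 (hzero H)) = 0"
    by (simp add: hnorm_def connect_inner fin H.zero_in H.inner_zero_left)
  ultimately show ?thesis
    using H.hnorm_eq_0_iff[OF connect_in[OF fin H.zero_in]] connect_in[OF fin h] by simp
qed

lemma pre_hilbert_dilation_space: "pre_hilbert D"
proof
  show "hzero D \<in> hcarrier D"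
    by (simp add: dilation_space_simps level_def fin_supp_def supp_def H.zero_in)
next
  fix a x assume "x \<in> hcarrier D"
  then show "hscale D a x \<in> hcarrier D" by (simp add: dilation_space_simps level_def H.scale_in)
next
  fix a x y assume "x \<in> hcarrier D" "y \<in> hcarrier D"
  then have fin: "fin_supp (level x + level y)" and "snd x \<in> hcarrier H" "snd y \<in> hcarrier H"
    by (simp_all add: fin_supp_add dilation_carrierD)
  moreover have "level (hscale D a x) = level x" by (simp add: level_def dilation_space_simps(3))
  ultimately show "hinner D (hscale D a x) y = a * hinner D x y"
    by (simp add: dilation_space_simps(3,5) connect_scale[OF fin] H.inner_scale_left
        connect_in[OF fin])
next
  fix x y assume "x \<in> hcarrier D" "y \<in> hcarrier D"
  then have fin: "fin_supp (level x + level y)" and "snd x \<in> hcarrier H" "snd y \<in> hcarrier H"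
    by (simp_all add: fin_supp_add dilation_carrierD)
  then show "hinner D x y = cnj (hinner D y x)"
    unfolding dilation_space_simps(5) add.commute[of "level y"]
    by (intro H.inner_commute connect_in)
next
  fix x assume "x \<in> hcarrier D"
  then have fin: "fin_supp (level x + level x)" and "snd x \<in> hcarrier H"
    by (simp_all add: fin_supp_add dilation_carrierD)
  then show "0 \<le> Re (hinner D x x)"
    unfolding dilation_space_simps(5) by (intro H.inner_self_nonneg connect_in)
qed (fact dilation_add_in dilation_inner_add_left dilation_inner_zero_left)+

text \<open>The phase is chosen so that the shift commutes with the connecting maps
(\<open>connect_shift\<close>), hence is well defined on the inductive limit.\<close>

definition phase :: "'l \<Rightarrow> ('l \<Rightarrow> nat) \<Rightarrow> complex" where
  "phase a n = twist q n (basis a) * cnj (twist q (basis a) n)"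

definition shift :: "'l \<Rightarrow> ('l \<Rightarrow> int) \<times> 'h \<Rightarrow> ('l \<Rightarrow> int) \<times> 'h" where
  "shift a x = (fst x, hscale H (phase a (level x)) (V a (snd x)))"

lemma phase_mult_cnj: "phase a n * cnj (phase a n) = 1"
proof -
  have "phase a n * cnj (phase a n) =
      (twist q n (basis a) * cnj (twist q n (basis a))) *
          (cnj (twist q (basis a) n) * twist q (basis a) n)"
    by (simp add: phase_def algebra_simps)
  then show ?thesis by (simp add: twist_mult_cnj twist_cnj_mult)
qed

lemma phase_0: "phase a 0 = 1"
  by (simp add: phase_def)

lemma level_shift: "level (shift a x) = level x"
  by (simp add: level_def shift_def)

lemma shift_in: "x \<in> hcarrier D \<Longrightarrow> shift a x \<in> hcarrier D"
  by (simp add: dilation_space_simps(1) shift_def level_def H.scale_in V_in)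

lemma connect_shift:
  assumes P: "fin_supp P" and "n \<le> P" and h: "h \<in> hcarrier H"
  shows "connect P n (hscale H (phase a n) (V a h)) = hscale H (phase a P) (V a (connect P n h))"
proof -
  define m where "m = P - n"
  have fin_n: "fin_supp n" using fin_supp_le assms(2) P by blast
  have fin_m: "fin_supp m" using fin_supp_diff P m_def by blast
  have P_eq: "P = m + n" using assms(2) by (auto simp: m_def le_fun_def fun_eq_iff)
  have Wm: "W m h \<in> hcarrier H" and Wme: "W (m + basis a) h \<in> hcarrier H"
    using h fin_m by (simp_all add: W_in fin_supp_add fin_supp_basis)
  have "connect P n (hscale H (phase a n) (V a h)) =
      hscale H (cnj (twist q m n) * phase a n * twist q m (basis a)) (W (m + basis a) h)"
    using W_W_twist[OF fin_m fin_supp_basis h] h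
    by (simp add: connect_def m_def[symmetric] W_scale[OF fin_m] V_in hscale_hscale W_in[OF fin_m]
        ordered_monomial_basis Wme mult.assoc)
  moreover have "hscale H (phase a P) (V a (connect P n h)) =
      hscale H (phase a P * (cnj (twist q m n) * twist q (basis a) m)) (W (m + basis a) h)"
    using V_W_twist[OF fin_m h, of a] Wm Wme
    by (simp add: connect_def m_def[symmetric] V_scale hscale_hscale V_in)
  moreover have "cnj (twist q m n) * phase a n * twist q m (basis a) =
      phase a P * (cnj (twist q m n) * twist q (basis a) m)"
  proof -
    have "phase a P = twist q m (basis a) * twist q n (basis a) *
        (cnj (twist q (basis a) m) * cnj (twist q (basis a) n))"
      unfolding phase_def P_eq
      by (simp add: twist_add_left[OF fin_m fin_n fin_supp_basis]
          twist_add_right[OF fin_supp_basis fin_m fin_n])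
    then have "phase a P * (cnj (twist q m n) * twist q (basis a) m) =
        (cnj (twist q (basis a) m) * twist q (basis a) m) *
        (cnj (twist q m n) * phase a n * twist q m (basis a))"
      by (simp add: phase_def algebra_simps)
    also have "\<dots> = cnj (twist q m n) * phase a n * twist q m (basis a)"
      by (simp only: twist_cnj_mult mult_1)
    finally show ?thesis by (rule sym)
  qed
  ultimately show ?thesis by simp
qed

sublocale D: pre_hilbert dilation_space
  by (rule pre_hilbert_dilation_space)

lemma V_inner: "x \<in> hcarrier H \<Longrightarrow> y \<in> hcarrier H \<Longrightarrow> hinner H (V a x) (V a y) = hinner H x y"
  using W_inner[OF fin_supp_basis] by (simp add: ordered_monomial_basis)

lemma inner_preserving_shift: "D.inner_preserving (shift a)"
  unfolding D.inner_preserving_def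
proof (intro conjI ballI)
  fix x y assume x: "x \<in> hcarrier D" and y: "y \<in> hcarrier D"
  show "shift a x \<in> hcarrier D" using x by (rule shift_in)
  let ?P = "level x + level y"
  have P: "fin_supp ?P" and h: "snd x \<in> hcarrier H" "snd y \<in> hcarrier H"
    using x y by (simp_all add: fin_supp_add dilation_carrierD)
  have "hinner D (shift a x) (shift a y) =
      hinner H (hscale H (phase a ?P) (V a (connect ?P (level x) (snd x))))
        (hscale H (phase a ?P) (V a (connect ?P (level y) (snd y))))"
    by (simp add: dilation_space_simps(5) level_shift)
      (simp add: shift_def connect_shift[OF P] h le_fun_def)
  also have "\<dots> = (phase a ?P * cnj (phase a ?P)) *
      hinner H (connect ?P (level x) (snd x)) (connect ?P (level y) (snd y))"
    by (simp add: H.inner_simps V_in connect_in[OF P] h V_inner mult.assoc)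
  finally show "hinner D (shift a x) (shift a y) = hinner D x y"
    by (simp add: phase_mult_cnj dilation_space_simps(5))
qed

lemma dilation_inner_connect:
  assumes x: "x \<in> hcarrier D" and y: "y \<in> hcarrier D" and t: "t \<in> hcarrier D"
    and le: "level x \<le> level y" and snd_y: "snd y = connect (level y) (level x) (snd x)"
  shows "hinner D y t = hinner D x t"
proof -
  let ?P = "level y + level t"
  have P: "fin_supp ?P" and h: "snd x \<in> hcarrier H"
    using y t x by (simp_all add: fin_supp_add dilation_carrierD)
  have "hinner D y t = hinner H (connect ?P (level y) (connect (level y) (level x) (snd x)))
      (connect ?P (level t) (snd t))"
    using dilation_inner_at[OF y t P] snd_y by (simp add: le_fun_def)
  also have "connect ?P (level y) (connect (level y) (level x) (snd x)) =
      connect ?P (level x) (snd x)"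
    using le by (intro connect_trans P h) (simp_all add: le_fun_def)
  also have "hinner H (connect ?P (level x) (snd x)) (connect ?P (level t) (snd t)) = hinner D x t"
  proof -
    have "level x \<le> ?P" using le by (simp add: le_fun_def trans_le_add1)
    then show ?thesis using dilation_inner_at[OF x t P] by (simp add: le_fun_def)
  qed
  finally show ?thesis .
qed

lemma shift_surj_up_to_null:
  assumes x: "x \<in> hcarrier D"
  shows "\<exists>y\<in>hcarrier D. hnorm D (hdiff D (shift a y) x) = 0"
proof -
  let ?n = "level x"
  define y where "y = (fst x + (\<lambda>b. int (basis a b)),
    hscale H (cnj (twist q (basis a) ?n) * cnj (phase a (?n + basis a))) (snd x))"
  have fin: "fin_supp ?n" and h: "snd x \<in> hcarrier H" using x by (simp_all add: dilation_carrierD)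
  have level_y: "level y = ?n + basis a"
    using dilation_carrierD(3)[OF x]
    by (simp add: y_def level_def fun_eq_iff nat_add_distrib basis_def)
  have y_in: "y \<in> hcarrier D"
    using dilation_carrierD(3)[OF x] level_y fin h
    by (simp add: dilation_space_simps(1) y_def level_def[symmetric] fin_supp_add fin_supp_basis
        H.scale_in
        add_nonneg_nonneg)
  have "snd (shift a y) = hscale H
      (phase a (?n + basis a) * (cnj (twist q (basis a) ?n) * cnj (phase a (?n + basis a))))
      (V a (snd x))"
    unfolding shift_def level_y using h by (simp add: y_def V_scale hscale_hscale V_in)
  also have "phase a (?n + basis a) * (cnj (twist q (basis a) ?n) * cnj (phase a (?n + basis a))) =
      cnj (twist q (basis a) ?n)"
    using phase_mult_cnj[of a "?n + basis a"] by (simp add: algebra_simps)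
  also have "hscale H (cnj (twist q (basis a) ?n)) (V a (snd x)) =
      connect (level (shift a y)) ?n (snd x)"
    by (simp add: connect_def level_shift level_y ordered_monomial_basis)
  finally have "hnorm D (hdiff D (shift a y) x) = 0"
    using shift_in[OF y_in] x level_y
    by (intro D.hnorm_diff_eq_0 dilation_inner_connect) (simp_all add: level_shift le_fun_def)
  then show ?thesis using y_in by blast
qed

lemma shift_commute:
  assumes "a \<noteq> b" "x \<in> hcarrier D"
  shows "shift a (shift b x) = hscale D (q a b) (shift b (shift a x))"
proof -
  let ?n = "level x"
  have h: "snd x \<in> hcarrier H" using assms(2) by (rule dilation_carrierD)
  have "snd (shift a (shift b x)) = hscale H (phase a ?n * phase b ?n * q a b) (V b (V a (snd x)))"
    unfolding shift_def[of a] level_shift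
    using h by (simp add: shift_def V_scale V_in commute[OF assms(1)] hscale_hscale mult.assoc)
  moreover have "snd (hscale D (q a b) (shift b (shift a x))) =
      hscale H (phase a ?n * phase b ?n * q a b) (V b (V a (snd x)))"
    unfolding shift_def[of b] level_shift
    using h by (simp add: shift_def dilation_space_simps(3) V_scale V_in hscale_hscale
        algebra_simps)
  ultimately show ?thesis by (simp add: prod_eq_iff shift_def dilation_space_simps(3))
qed

definition ground :: "'h \<Rightarrow> ('l \<Rightarrow> int) \<times> 'h" where
  "ground x = (0, x)"

lemma level_ground: "level (0, x) = 0"
  by (simp add: level_def zero_fun_def)

lemma hisometry_map_ground: "hisometry_map H D ground"
  unfolding hisometry_map_def hlinear_def
proof (intro conjI ballI allI)
  fix x y c assume x: "x \<in> hcarrier H" and y: "y \<in> hcarrier H"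
  show "ground x \<in> hcarrier D"
    using x by (simp add: dilation_space_simps(1) ground_def level_ground fin_supp_0)
  show "ground (hadd H x y) = hadd D (ground x) (ground y)"
    using x y by (simp add: dilation_space_simps(2) ground_def level_ground connect_self)
  show "ground (hscale H c x) = hscale D c (ground x)"
    by (simp add: ground_def dilation_space_simps(3))
  show "hnorm D (ground x) = hnorm H x"
    using x by (simp add: hnorm_def dilation_space_simps(5) ground_def level_ground connect_self)
qed

lemma shift_ground: "x \<in> hcarrier H \<Longrightarrow> shift a (ground x) = ground (V a x)"
  by (simp add: shift_def ground_def level_ground phase_0 hscale_one V_in)

end

theorem corollary5p4:
  fixes H :: "'h hspace"
    and q :: "'l \<Rightarrow> 'l \<Rightarrow> complex"
    and V :: "'l \<Rightarrow> 'h \<Rightarrow> 'h"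
  assumes "is_chilbert H"
    and "\<And>\<alpha> \<beta>. \<alpha> \<noteq> \<beta> \<Longrightarrow> cmod (q \<alpha> \<beta>) = 1"
    and "\<And>\<alpha> \<beta>. \<alpha> \<noteq> \<beta> \<Longrightarrow> q \<alpha> \<beta> = inverse (q \<beta> \<alpha>)"
    and "\<And>\<alpha>. hisometry H (V \<alpha>)"
    and "\<And>\<alpha> \<beta> x. \<alpha> \<noteq> \<beta> \<Longrightarrow> x \<in> hcarrier H \<Longrightarrow>
           V \<alpha> (V \<beta> x) = hscale H (q \<alpha> \<beta>) (V \<beta> (V \<alpha> x))"
  shows "\<exists>(K :: (nat \<Rightarrow> ('l \<Rightarrow> int) \<times> 'h) hspace) \<iota> U.
           is_chilbert K \<and> hisometry_map H K \<iota> \<and>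
           (\<forall>\<alpha>. hunitary K (U \<alpha>)) \<and>
           (\<forall>\<alpha> \<beta>. \<alpha> \<noteq> \<beta> \<longrightarrow> (\<forall>y\<in>hcarrier K.
              U \<alpha> (U \<beta> y) = hscale K (q \<alpha> \<beta>) (U \<beta> (U \<alpha> y)))) \<and>
           (\<forall>\<alpha>. \<forall>x\<in>hcarrier H. U \<alpha> (\<iota> x) = \<iota> (V \<alpha> x))"
proof -
  interpret q_commuting_isometries H q V
    using assms(1,2,4,5) by unfold_locales
  let ?\<iota> = "D.embed \<circ> ground" and ?U = "\<lambda>\<alpha>. D.extend (shift \<alpha>)"
  show ?thesis
  proof (intro exI[of _ D.completion] exI[of _ ?\<iota>] exI[of _ ?U] conjI allI impI ballI)
    show "is_chilbert D.completion" by (rule D.is_chilbert_completion)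
    show "hisometry_map H D.completion ?\<iota>"
      using hisometry_map_ground D.hisometry_map_embed by (rule hisometry_map_comp)
    show "hunitary D.completion (?U \<alpha>)" for \<alpha>
      using inner_preserving_shift shift_surj_up_to_null by (rule D.hunitary_extend)
    show "?U \<alpha> (?U \<beta> y) = hscale D.completion (q \<alpha> \<beta>) (?U \<beta> (?U \<alpha> y))"
      if "\<alpha> \<noteq> \<beta>" "y \<in> hcarrier D.completion" for \<alpha> \<beta> y
      using inner_preserving_shift inner_preserving_shift that(2) shift_commute[OF that(1)]
      by (rule D.extend_commute)
    show "?U \<alpha> (?\<iota> x) = ?\<iota> (V \<alpha> x)" if "x \<in> hcarrier H" for \<alpha> x
      using that hisometry_map_ground
      by (simp add: D.extend_embed[OF inner_preserving_shift] shift_ground hisometry_map_def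
          hlinear_def)
  qed
qed

end
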